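(* Let $U\subseteq L_{\mathrm{up}}$ be a set of up-links such that the sets $P_u$, $u\in U$, are pairwise disjoint, and let $(C,A)$ be a (weakly) connected component of the dependency graph of $U$ (which is an arborescence). If $\ell_1,\ell_2\in C$ satisfy $V_{\ell_1}\cap V_{\ell_2}\neq\emptyset$, then $\ell_1$ and $\ell_2$ have an ancestry relationship in the arborescence $(C,A)$, i.e. $\ell_1$ is an ancestor of $\ell_2$ or $\ell_2$ is an ancestor of $\ell_1$ in $(C,A)$.
   Context: Let $(G=(V,E),L,w)$ be a WTAP instance (spanning tree $G$, links $L\subseteq\binom V2$, weights $w>0$) with a fixed root $r\in V$, and let $F\subseteq L$ be a WTAP solution, i.e. $\bigcup_{\ell\in F}P_\ell=E$, where $P_\ell$ is the edge set of the tree path between the endpoints of $\ell$ and $V_\ell$ its vertex set. Ancestors of $v$ are the vertices on the $r$-$v$ path in $G$ (including $r$ and $v$); descendants are defined reciprocally. $\mathrm{apex}(\ell)$ is the vertex of $V_\ell$ closest to $r$. An up-link is a link $\{t,b\}$ with $t$ an ancestor of $b$; $L_{\mathrm{up}}$ is the set of up-links. For $v\in V$ let $B_v=\{\ell\in F\colon\mathrm{apex}(\ell)\text{ is a descendant of }v\}$. For an up-link $u=\{t,b\}$ with $t$ an ancestor of $b$, let $v_u$ be the ancestor of $t$ farthest from $r$ such that $P_u\subseteq\bigcup_{\ell\in B_{v_u}}P_\ell$, and fix $F_u\subseteq B_{v_u}$ inclusion-wise minimal with $P_u\subseteq\bigcup_{\ell\in F_u}P_\ell$. For $\ell\in F_u$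 let $P_{u,\ell}=P_u\setminus\bigcup_{\bar\ell\in F_u\setminus\{\ell\}}P_{\bar\ell}$; these sets are nonempty, pairwise disjoint, and each is the edge set of a path. Define $\ell_1\prec_u\ell_2$ iff the edges of $P_{u,\ell_1}$ appear before those of $P_{u,\ell_2}$ on the $t$-$b$ path in $G$. If $\ell_1\prec_u\cdots\prec_u\ell_q$ are the links of $F_u$, let $A_u=\{(\ell_i,\ell_{i+1})\colon i=1,\dots,q-1\}$. The dependency graph of $U\subseteq L_{\mathrm{up}}$ is the directed graph with vertex set $F$ whose arc set is the disjoint union of the $A_u$, $u\in U$. When the $P_u$, $u\in U$, are pairwise disjoint, this graph is a branching (no directed cycles, in-degrees at most one), so each weakly connected component is an arborescence. *)

theory Defs
  imports Complex_Main
begin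

text \<open>Vertices have type 'a; an (undirected) edge or a link is a 2-element set of vertices.\<close>

definition path_edges :: "'a list \<Rightarrow> 'a set set" where
  "path_edges p = {{p ! i, p ! Suc i} | i. Suc i < length p}"

definition is_vpath :: "'a set set \<Rightarrow> 'a list \<Rightarrow> bool" where
  "is_vpath E p \<longleftrightarrow> p \<noteq> [] \<and> distinct p \<and> (\<forall>i. Suc i < length p \<longrightarrow> {p ! i, p ! Suc i} \<in> E)"

definition is_spanning_tree :: "'a set \<Rightarrow> 'a set set \<Rightarrow> bool" where
  "is_spanning_tree V E \<longleftrightarrow>
     finite V \<and> V \<noteq> {} \<and>
     E \<subseteq> {{x, y} | x y. x \<in> V \<and> y \<in> V \<and> x \<noteq> y} \<and>
     (\<forall>x\<in>V. \<forall>y\<in>V. \<exists>p. is_vpath E p \<and> hd p = x \<and> last p = y) \<and>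
     \<not> (\<exists>p. is_vpath E p \<and> length p \<ge> 3 \<and> {last p, hd p} \<in> E)"

definition tpath :: "'a set set \<Rightarrow> 'a \<Rightarrow> 'a \<Rightarrow> 'a list" where
  "tpath E s t = (THE p. is_vpath E p \<and> hd p = s \<and> last p = t)"

definition Vl :: "'a set set \<Rightarrow> 'a set \<Rightarrow> 'a set" where
  "Vl E l = \<Union>{set (tpath E x y) | x y. l = {x, y}}"

definition Pl :: "'a set set \<Rightarrow> 'a set \<Rightarrow> 'a set set" where
  "Pl E l = \<Union>{path_edges (tpath E x y) | x y. l = {x, y}}"

definition anc :: "'a set set \<Rightarrow> 'a \<Rightarrow> 'a \<Rightarrow> 'a set" where
  "anc E r v = set (tpath E r v)"

definition desc :: "'a set \<Rightarrow> 'a set set \<Rightarrow> 'a \<Rightarrow> 'a \<Rightarrow> 'a set" where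
  "desc V E r v = {x \<in> V. v \<in> anc E r x}"

text \<open>Distance from the root (number of vertices on the root path).\<close>
definition depth :: "'a set set \<Rightarrow> 'a \<Rightarrow> 'a \<Rightarrow> nat" where
  "depth E r v = length (tpath E r v)"

definition apex :: "'a set set \<Rightarrow> 'a \<Rightarrow> 'a set \<Rightarrow> 'a" where
  "apex E r l = (THE x. x \<in> Vl E l \<and> (\<forall>y\<in>Vl E l. depth E r x \<le> depth E r y))"

definition is_up_link :: "'a set set \<Rightarrow> 'a \<Rightarrow> 'a set \<Rightarrow> bool" where
  "is_up_link E r l \<longleftrightarrow> (\<exists>t b. l = {t, b} \<and> t \<noteq> b \<and> t \<in> anc E r b)"

definition L_up :: "'a set set \<Rightarrow> 'a \<Rightarrow> 'a set set \<Rightarrow> 'a set set" where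
  "L_up E r L = {l \<in> L. is_up_link E r l}"

definition up_top :: "'a set set \<Rightarrow> 'a \<Rightarrow> 'a set \<Rightarrow> 'a" where
  "up_top E r u = (THE t. \<exists>b. u = {t, b} \<and> t \<noteq> b \<and> t \<in> anc E r b)"

definition up_bot :: "'a set set \<Rightarrow> 'a \<Rightarrow> 'a set \<Rightarrow> 'a" where
  "up_bot E r u = (THE b. \<exists>t. u = {t, b} \<and> t \<noteq> b \<and> t \<in> anc E r b)"

definition Bset :: "'a set \<Rightarrow> 'a set set \<Rightarrow> 'a \<Rightarrow> 'a set set \<Rightarrow> 'a \<Rightarrow> 'a set set" where
  "Bset V E r F v = {l \<in> F. apex E r l \<in> desc V E r v}"

definition v_of :: "'a set \<Rightarrow> 'a set set \<Rightarrow> 'a \<Rightarrow> 'a set set \<Rightarrow> 'a set \<Rightarrow> 'a" where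
  "v_of V E r F u = (THE v. v \<in> anc E r (up_top E r u)
      \<and> Pl E u \<subseteq> \<Union>(Pl E ` Bset V E r F v)
      \<and> (\<forall>v'\<in>anc E r (up_top E r u). Pl E u \<subseteq> \<Union>(Pl E ` Bset V E r F v')
            \<longrightarrow> depth E r v' \<le> depth E r v))"

definition valid_Fu :: "'a set \<Rightarrow> 'a set set \<Rightarrow> 'a \<Rightarrow> 'a set set \<Rightarrow> 'a set \<Rightarrow> 'a set set \<Rightarrow> bool" where
  "valid_Fu V E r F u S \<longleftrightarrow>
     S \<subseteq> Bset V E r F (v_of V E r F u) \<and> Pl E u \<subseteq> \<Union>(Pl E ` S) \<and>
     (\<forall>S'. S' \<subset> S \<longrightarrow> \<not> Pl E u \<subseteq> \<Union>(Pl E ` S'))"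

definition Pul :: "'a set set \<Rightarrow> 'a set \<Rightarrow> 'a set set \<Rightarrow> 'a set \<Rightarrow> 'a set set" where
  "Pul E u S l = Pl E u - \<Union>(Pl E ` (S - {l}))"

definition prec_u :: "'a set set \<Rightarrow> 'a \<Rightarrow> 'a set \<Rightarrow> 'a set set \<Rightarrow> 'a set \<Rightarrow> 'a set \<Rightarrow> bool" where
  "prec_u E r u S l1 l2 \<longleftrightarrow>
     (let p = tpath E (up_top E r u) (up_bot E r u) in
      \<forall>e1\<in>Pul E u S l1. \<forall>e2\<in>Pul E u S l2. \<forall>i j.
        Suc i < length p \<longrightarrow> Suc j < length p \<longrightarrow>
        e1 = {p ! i, p ! Suc i} \<longrightarrow> e2 = {p ! j, p ! Suc j} \<longrightarrow> i < j)"

definition A_u :: "'a set set \<Rightarrow> 'a \<Rightarrow> 'a set \<Rightarrow> 'a set set \<Rightarrow> ('a set \<times> 'a set) set" where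
  "A_u E r u S = {(l1, l2). l1 \<in> S \<and> l2 \<in> S \<and> l1 \<noteq> l2 \<and> prec_u E r u S l1 l2 \<and>
      \<not> (\<exists>l\<in>S. l \<noteq> l1 \<and> l \<noteq> l2 \<and> prec_u E r u S l1 l \<and> prec_u E r u S l l2)}"

text \<open>Arc set of the dependency graph of U (vertex set F), for the choice Fsel u = F_u.\<close>
definition dep_arcs :: "'a set set \<Rightarrow> 'a \<Rightarrow> 'a set set \<Rightarrow> ('a set \<Rightarrow> 'a set set) \<Rightarrow> ('a set \<times> 'a set) set" where
  "dep_arcs E r U Fsel = (\<Union>u\<in>U. A_u E r u (Fsel u))"

end

theory Submission
  imports Defs
begin

(* Identify every tree edge with its endpoint farther from the root. Then P_l becomes the set of
   vertices of V_l other than apex(l), and along an up-link u, whose path is a chain of ancestors,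
   the order of u becomes the order by depth. An arc (m, c) of A_u puts apex(c) on P_u and on P_m,
   below all vertices that only m contributes to P_u. Consequently all arcs entering c come from the
   one up-link whose path contains the edge above apex(c), so the dependency graph has in-degree at
   most one, and every descendant of c lies below apex(c), the tree path down to it being covered
   by B_apex(c).

   Two links of a component that share a vertex x have a common ancestor in the graph. If neither
   descends from the other, some link m has two children c1, c2, reached through up-links u1 and
   u2 with u1 <> u2, whose descendants both contain x; say apex(c1) is an ancestor of apex(c2).
   Disjointness of P_u1 and P_u2 makes apex(c1) an ancestor of the top of u2, and then B_apex(c1)
   covers P_u2. But apex(c1) is strictly deeper than apex(m), which is at least as deep as v_u2
   because m is in B_(v_u2): this contradicts the choice of v_u2 as the deepest such vertex. *)

lemma is_vpath_iff_successively:
  "is_vpath E p \<longleftrightarrow> p \<noteq> [] \<and> distinct p \<and> successively (\<lambda>x y. {x, y} \<in> E) p"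
  unfolding is_vpath_def successively_conv_nth by blast

lemma is_vpath_take: "is_vpath E p \<Longrightarrow> 0 < n \<Longrightarrow> is_vpath E (take n p)"
  unfolding is_vpath_def by auto

lemma is_vpath_drop: "is_vpath E p \<Longrightarrow> n < length p \<Longrightarrow> is_vpath E (drop n p)"
  unfolding is_vpath_def by auto

lemma is_vpath_rev: "is_vpath E p \<Longrightarrow> is_vpath E (rev p)"
  unfolding is_vpath_iff_successively by (simp add: insert_commute)

lemma last_take_Suc: "i < length xs \<Longrightarrow> last (take (Suc i) xs) = xs ! i"
  by (simp add: take_Suc_conv_app_nth)

lemma in_set_drop_iff: "w \<in> set (drop k xs) \<longleftrightarrow> (\<exists>i<length xs. k \<le> i \<and> xs ! i = w)"
proof
  assume "w \<in> set (drop k xs)"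
  then obtain j where "j < length xs - k" "xs ! (k + j) = w" by (auto simp: in_set_conv_nth)
  then show "\<exists>i<length xs. k \<le> i \<and> xs ! i = w" by (intro exI[of _ "k + j"]) auto
next
  assume "\<exists>i<length xs. k \<le> i \<and> xs ! i = w"
  then obtain i where "i < length xs" "k \<le> i" "xs ! i = w" by blast
  then show "w \<in> set (drop k xs)" unfolding in_set_conv_nth by (intro exI[of _ "i - k"]) auto
qed

lemma distinct_last_Cons_eq: "distinct (x # xs) \<Longrightarrow> last (x # xs) = x \<Longrightarrow> xs = []"
  by (metis distinct.simps(2) last.simps last_in_set)

lemma rtrancl_Un_converse_common_source:
  assumes "single_valued (R\<inverse>)" "(a, x) \<in> (R \<union> R\<inverse>)\<^sup>*"
  shows "\<exists>\<rho>. (\<rho>, a) \<in> R\<^sup>* \<and> (\<rho>, x) \<in> R\<^sup>*"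
  using assms(2)
proof (induction rule: rtrancl_induct)
  case base
  then show ?case by blast
next
  case (step y z)
  then obtain \<rho> where \<rho>: "(\<rho>, a) \<in> R\<^sup>*" "(\<rho>, y) \<in> R\<^sup>*" by blast
  from step.hyps(2) show ?case
  proof
    assume "(y, z) \<in> R"
    then show ?thesis using \<rho> by (meson rtrancl.rtrancl_into_rtrancl)
  next
    assume "(y, z) \<in> R\<inverse>"
    then have zy: "(z, y) \<in> R" by simp
    from \<rho>(2) show ?thesis
    proof (cases rule: rtranclE)
      case base
      then have "(z, a) \<in> R\<^sup>*" using \<rho>(1) zy by (meson converse_rtrancl_into_rtrancl)
      then show ?thesis by blast
    next
      case (step y')
      then have "y' = z" using single_valuedD[OF assms(1)] zy by blast
      then show ?thesis using \<rho> step by blast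
    qed
  qed
qed

lemma rtrancl_comparable_if_no_split:
  assumes "(\<rho>, a) \<in> R\<^sup>*" "(\<rho>, b) \<in> R\<^sup>*" "P a" "P b"
    and no_split: "\<And>m c1 c2 y z. (m, c1) \<in> R \<Longrightarrow> (m, c2) \<in> R \<Longrightarrow> c1 \<noteq> c2 \<Longrightarrow>
      (c1, y) \<in> R\<^sup>* \<Longrightarrow> (c2, z) \<in> R\<^sup>* \<Longrightarrow> P y \<Longrightarrow> P z \<Longrightarrow> False"
  shows "(a, b) \<in> R\<^sup>* \<or> (b, a) \<in> R\<^sup>*"
  using assms(1,2)
proof (induction rule: converse_rtrancl_induct)
  case base
  then show ?case by blast
next
  case (step \<rho> c1)
  from step.prems show ?case
  proof (cases rule: converse_rtranclE)
    case base
    then show ?thesis using step.hyps by (meson converse_rtrancl_into_rtrancl)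
  next
    case (step c2)
    then show ?thesis
      using step.IH no_split[OF step.hyps(1) step(1) _ step.hyps(2) step(2) assms(3,4)] by blast
  qed
qed

lemma rtrancl_restrict_closed:
  assumes "(a, b) \<in> R\<^sup>*" "a \<in> C" "R `` C \<subseteq> C"
  shows "(a, b) \<in> (R \<inter> C \<times> C)\<^sup>*"
proof -
  have "(a, b) \<in> (R \<inter> C \<times> C)\<^sup>* \<and> b \<in> C"
    using assms(1)
  proof (induction rule: rtrancl_induct)
    case base
    then show ?case using assms(2) by simp
  next
    case (step b c)
    then have "c \<in> C" using assms(3) by blast
    with step show ?case by (meson IntI SigmaI rtrancl.rtrancl_into_rtrancl)
  qed
  then show ?thesis by blast
qed

locale rooted_tree =
  fixes V :: "'a set" and E :: "'a set set" and r :: 'a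
  assumes spanning_tree: "is_spanning_tree V E" and root_in_V: "r \<in> V"
begin

abbreviation ancestor :: "'a \<Rightarrow> 'a \<Rightarrow> bool" (infix "\<preceq>" 50) where
  "a \<preceq> v \<equiv> a \<in> anc E r v"

abbreviation rpath :: "'a \<Rightarrow> 'a list" where
  "rpath v \<equiv> tpath E r v"

lemma tree_connected: "x \<in> V \<Longrightarrow> y \<in> V \<Longrightarrow> \<exists>p. is_vpath E p \<and> hd p = x \<and> last p = y"
  using spanning_tree unfolding is_spanning_tree_def by blast

lemma tree_acyclic: "is_vpath E p \<Longrightarrow> 3 \<le> length p \<Longrightarrow> {last p, hd p} \<in> E \<Longrightarrow> False"
  using spanning_tree unfolding is_spanning_tree_def by blast

lemma edge_ends: "{x, y} \<in> E \<Longrightarrow> x \<in> V \<and> y \<in> V \<and> x \<noteq> y"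
  using spanning_tree unfolding is_spanning_tree_def by (auto simp: doubleton_eq_iff)

subsection \<open>Uniqueness of tree paths\<close>

lemma vpaths_agree_on_second_vertex:
  assumes p: "is_vpath E (x # p)" and q: "is_vpath E (x # q)"
    and ne: "p \<noteq> []" "q \<noteq> []" and last: "last p = last q"
  shows "hd p = hd q"
proof (rule ccontr)
  assume hd_ne: "hd p \<noteq> hd q"
  have dp: "distinct (x # p)" "successively (\<lambda>x y. {x, y} \<in> E) (x # p)"
    and dq: "distinct (x # q)" "successively (\<lambda>x y. {x, y} \<in> E) (x # q)"
    using p q unfolding is_vpath_iff_successively by auto
  obtain xs w ys where sp: "p = xs @ w # ys" "w \<in> set q" "\<forall>y\<in>set xs. y \<notin> set q"
    using split_list_first_prop[of p "\<lambda>v. v \<in> set q"] ne last by (metis last_in_set)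
  obtain as bs where sq: "q = as @ w # bs" using sp(2) split_list by metis
  \<comment> \<open>the paths leave \<open>x\<close> differently and first meet again at \<open>w\<close>, closing a cycle\<close>
  define c where "c = (x # xs) @ rev (as @ [w])"
  have "distinct c" unfolding c_def using dp(1) dq(1) sp sq by auto
  moreover have "successively (\<lambda>x y. {x, y} \<in> E) c"
  proof -
    have s1: "successively (\<lambda>x y. {x, y} \<in> E) (x # xs @ [w])"
      using dp(2) sp(1) successively_append_iff[of _ "x # xs @ [w]" ys] by simp
    have "successively (\<lambda>x y. {x, y} \<in> E) (x # as @ [w])"
      using dq(2) sq successively_append_iff[of _ "x # as @ [w]" bs] by simp
    then have "successively (\<lambda>x y. {x, y} \<in> E) (rev (as @ [w]))"
      unfolding successively_rev by (simp add: successively_Cons insert_commute split: if_splits)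
    moreover have "successively (\<lambda>x y. {x, y} \<in> E) (x # xs)" "{last (x # xs), w} \<in> E"
      using s1 successively_append_iff[of _ "x # xs" "[w]"] by simp_all
    ultimately show ?thesis
      unfolding c_def using successively_append_iff[of _ "x # xs" "rev (as @ [w])"] by simp
  qed
  moreover have "3 \<le> length c"
    using hd_ne sp(1) sq unfolding c_def by (cases xs; cases as) auto
  moreover have "{last c, hd c} \<in> E"
  proof -
    have "last c = hd q" unfolding c_def using sq by (cases as) auto
    moreover have "{x, hd q} \<in> E" using dq(2) ne(2) by (cases q) auto
    ultimately show ?thesis unfolding c_def by (simp add: insert_commute)
  qed
  ultimately show False
    using tree_acyclic is_vpath_iff_successively unfolding c_def by blast
qed

lemma vpath_unique:
  assumes "is_vpath E p" "is_vpath E q" "hd p = hd q" "last p = last q"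
  shows "p = q"
  using assms
proof (induction p arbitrary: q)
  case Nil
  then show ?case by (simp add: is_vpath_def)
next
  case (Cons x p)
  obtain q' where q: "q = x # q'"
    using Cons.prems(2,3) by (cases q) (auto simp: is_vpath_def)
  have dist: "distinct (x # p)" "distinct (x # q')"
    using Cons.prems(1,2) q by (auto simp: is_vpath_def)
  show ?case
  proof (cases "p = [] \<or> q' = []")
    case True
    then show ?thesis
      using Cons.prems(4) q dist distinct_last_Cons_eq by fastforce
  next
    case False
    have "hd p = hd q'" "last p = last q'"
      using vpaths_agree_on_second_vertex[of x p q'] Cons.prems q False by auto
    moreover have "is_vpath E p" "is_vpath E q'"
      using Cons.prems(1,2) q False by (auto simp: is_vpath_iff_successively successively_Cons)
    ultimately show ?thesis using Cons.IH q by blast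
  qed
qed

lemma tpath_eqI: "is_vpath E p \<Longrightarrow> hd p = x \<Longrightarrow> last p = y \<Longrightarrow> tpath E x y = p"
  unfolding tpath_def by (rule the_equality) (auto intro: vpath_unique)

lemma
  assumes "x \<in> V" "y \<in> V"
  shows is_vpath_tpath: "is_vpath E (tpath E x y)"
    and hd_tpath: "hd (tpath E x y) = x"
    and last_tpath: "last (tpath E x y) = y"
proof -
  obtain p where "is_vpath E p" "hd p = x" "last p = y" using tree_connected assms by blast
  moreover from this have "tpath E x y = p" by (rule tpath_eqI)
  ultimately show "is_vpath E (tpath E x y)" "hd (tpath E x y) = x" "last (tpath E x y) = y"
    by auto
qed

lemma vpath_subset_V:
  assumes "is_vpath E p" "hd p \<in> V"
  shows "set p \<subseteq> V"
proof
  fix v assume "v \<in> set p"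
  then obtain i where i: "i < length p" "p ! i = v" by (auto simp: in_set_conv_nth)
  show "v \<in> V"
  proof (cases i)
    case 0
    then show ?thesis using assms i by (simp add: hd_conv_nth is_vpath_def)
  next
    case (Suc j)
    then show ?thesis using assms i edge_ends unfolding is_vpath_def by blast
  qed
qed

lemma set_tpath_subset: "x \<in> V \<Longrightarrow> y \<in> V \<Longrightarrow> set (tpath E x y) \<subseteq> V"
  using is_vpath_tpath hd_tpath vpath_subset_V by metis

lemma tpath_rev: "x \<in> V \<Longrightarrow> y \<in> V \<Longrightarrow> tpath E y x = rev (tpath E x y)"
  by (rule tpath_eqI) (auto simp: is_vpath_rev is_vpath_tpath hd_rev last_rev hd_tpath last_tpath)

subsection \<open>Root paths, ancestors and depth\<close>

lemma
  assumes "v \<in> V"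
  shows is_vpath_rpath: "is_vpath E (rpath v)"
    and hd_rpath: "hd (rpath v) = r"
    and last_rpath: "last (rpath v) = v"
    and rpath_nonempty: "rpath v \<noteq> []"
  using is_vpath_tpath[OF root_in_V assms] hd_tpath[OF root_in_V assms]
    last_tpath[OF root_in_V assms] by (auto simp: is_vpath_def)

lemma anc_subset_V: "v \<in> V \<Longrightarrow> anc E r v \<subseteq> V"
  unfolding anc_def using set_tpath_subset root_in_V by blast

lemma depth_pos: "v \<in> V \<Longrightarrow> 1 \<le> depth E r v"
  unfolding depth_def using rpath_nonempty by (simp add: Suc_leI)

lemma rpath_rpath_nth:
  assumes "v \<in> V" "i < depth E r v"
  shows "rpath (rpath v ! i) = take (Suc i) (rpath v)"
proof (rule tpath_eqI)
  show "is_vpath E (take (Suc i) (rpath v))" using is_vpath_take is_vpath_rpath assms by blast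
  show "hd (take (Suc i) (rpath v)) = r" using hd_rpath[OF assms(1)] by simp
  show "last (take (Suc i) (rpath v)) = rpath v ! i"
    using assms last_take_Suc unfolding depth_def by blast
qed

lemma depth_rpath_nth: "v \<in> V \<Longrightarrow> i < depth E r v \<Longrightarrow> depth E r (rpath v ! i) = Suc i"
  using rpath_rpath_nth unfolding depth_def by simp

lemma rpath_anc: assumes "v \<in> V" "w \<preceq> v" shows "rpath w = take (depth E r w) (rpath v)"
proof -
  obtain i where "i < depth E r v" "rpath v ! i = w"
    using assms(2) unfolding anc_def depth_def by (auto simp: in_set_conv_nth)
  then show ?thesis using rpath_rpath_nth depth_rpath_nth assms(1) by metis
qed

lemma anc_refl: "v \<in> V \<Longrightarrow> v \<preceq> v"
  unfolding anc_def using last_rpath rpath_nonempty by (metis last_in_set)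

lemma root_anc: "v \<in> V \<Longrightarrow> r \<preceq> v"
  unfolding anc_def using hd_rpath rpath_nonempty by (metis hd_in_set)

lemma depth_anc_le: "v \<in> V \<Longrightarrow> w \<preceq> v \<Longrightarrow> depth E r w \<le> depth E r v"
  using rpath_anc unfolding depth_def by (metis length_take min.bounded_iff nle_le)

lemma anc_trans: "v \<in> V \<Longrightarrow> w \<preceq> v \<Longrightarrow> u \<preceq> w \<Longrightarrow> u \<preceq> v"
  using rpath_anc unfolding anc_def by (metis in_set_takeD)

lemma anc_eq_if_depth_eq:
  assumes "v \<in> V" "w \<preceq> v" "depth E r w = depth E r v"
  shows "w = v"
proof -
  have "w \<in> V" using anc_subset_V assms by blast
  moreover have "rpath w = rpath v" using rpath_anc[OF assms(1,2)] assms(3) unfolding depth_def by simp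
  ultimately show ?thesis using last_rpath assms(1) by metis
qed

lemma anc_antisym: "v \<in> V \<Longrightarrow> w \<preceq> v \<Longrightarrow> v \<preceq> w \<Longrightarrow> w = v"
  using anc_subset_V depth_anc_le anc_eq_if_depth_eq by (metis le_antisym subsetD)

lemma depth_anc_less: "v \<in> V \<Longrightarrow> w \<preceq> v \<Longrightarrow> w \<noteq> v \<Longrightarrow> depth E r w < depth E r v"
  using depth_anc_le anc_eq_if_depth_eq by fastforce

lemma anc_linear:
  assumes "v \<in> V" "a \<preceq> v" "b \<preceq> v"
  shows "a \<preceq> b \<or> b \<preceq> a"
proof -
  have V: "a \<in> V" "b \<in> V" using anc_subset_V assms by auto
  have ra: "rpath a = take (depth E r a) (rpath v)" and rb: "rpath b = take (depth E r b) (rpath v)"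
    using rpath_anc assms by auto
  show ?thesis
  proof (cases "depth E r a \<le> depth E r b")
    case True
    then have "rpath a = take (depth E r a) (rpath b)" using ra rb by (simp add: min_absorb1)
    then show ?thesis using anc_refl[OF V(1)] unfolding anc_def by (metis in_set_takeD)
  next
    case False
    then have "rpath b = take (depth E r b) (rpath a)" using ra rb by (simp add: min_absorb1)
    then show ?thesis using anc_refl[OF V(2)] unfolding anc_def by (metis in_set_takeD)
  qed
qed

lemma anc_eq_if_same_depth:
  "v \<in> V \<Longrightarrow> a \<preceq> v \<Longrightarrow> b \<preceq> v \<Longrightarrow> depth E r a = depth E r b \<Longrightarrow> a = b"
  using anc_linear anc_subset_V anc_eq_if_depth_eq by (metis subsetD)

lemma rpath_root: "rpath r = [r]"
  by (rule tpath_eqI) (auto simp: is_vpath_def)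

lemma anc_root: "w \<preceq> r \<Longrightarrow> w = r"
  unfolding anc_def using rpath_root by simp

lemma depth_root: "depth E r r = 1"
  unfolding depth_def using rpath_root by simp

lemma depth_ge_2: "v \<in> V \<Longrightarrow> v \<noteq> r \<Longrightarrow> 2 \<le> depth E r v"
  using depth_pos anc_eq_if_depth_eq[OF _ root_anc] depth_root by fastforce

definition parent :: "'a \<Rightarrow> 'a" where
  "parent v = rpath v ! (depth E r v - 2)"

definition parent_edge :: "'a \<Rightarrow> 'a set" where
  "parent_edge v = {parent v, v}"

lemma
  assumes "v \<in> V" "v \<noteq> r"
  shows rpath_parent: "rpath v = rpath (parent v) @ [v]"
    and depth_parent: "depth E r (parent v) = depth E r v - 1"
    and parent_anc: "parent v \<preceq> v"
    and parent_in_V: "parent v \<in> V"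
    and parent_neq: "parent v \<noteq> v"
    and parent_edge_in_E: "parent_edge v \<in> E"
proof -
  have d2: "2 \<le> depth E r v" using depth_ge_2 assms by blast
  have i: "depth E r v - 2 < depth E r v" using d2 by simp
  have sd: "Suc (depth E r v - 2) = depth E r v - 1" using d2 by simp
  have rp: "rpath (parent v) = take (depth E r v - 1) (rpath v)"
    unfolding parent_def using rpath_rpath_nth[OF assms(1) i] sd by simp
  have "rpath v = butlast (rpath v) @ [last (rpath v)]" using rpath_nonempty[OF assms(1)] by simp
  also have "butlast (rpath v) = take (depth E r v - 1) (rpath v)"
    unfolding depth_def by (simp add: butlast_conv_take)
  finally show "rpath v = rpath (parent v) @ [v]" using rp last_rpath[OF assms(1)] by simp
  show pa: "parent v \<preceq> v" unfolding parent_def anc_def using i unfolding depth_def by simp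
  then show "parent v \<in> V" using anc_subset_V assms(1) by blast
  show "depth E r (parent v) = depth E r v - 1"
    unfolding parent_def using depth_rpath_nth[OF assms(1) i] sd by simp
  then show "parent v \<noteq> v" using d2 by auto
  have "Suc (depth E r v - 2) < length (rpath v)" using d2 unfolding depth_def by simp
  moreover have "rpath v ! Suc (depth E r v - 2) = v"
    using sd last_rpath[OF assms(1)] rpath_nonempty[OF assms(1)] unfolding depth_def
    by (metis last_conv_nth)
  ultimately show "parent_edge v \<in> E"
    using is_vpath_rpath[OF assms(1)] unfolding parent_edge_def parent_def is_vpath_def by metis
qed

lemma anc_parent: "v \<in> V \<Longrightarrow> v \<noteq> r \<Longrightarrow> w \<preceq> v \<Longrightarrow> w \<noteq> v \<Longrightarrow> w \<preceq> parent v"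
  using rpath_parent unfolding anc_def by fastforce

lemma parent_rpath_nth:
  assumes "v \<in> V" "Suc j < depth E r v"
  shows "parent (rpath v ! Suc j) = rpath v ! j"
  using rpath_rpath_nth[OF assms] depth_rpath_nth[OF assms] unfolding parent_def by simp

lemma edge_parent_if_not_anc:
  assumes "{x, y} \<in> E" "\<not> y \<preceq> x"
  shows "y \<noteq> r \<and> parent y = x"
proof -
  have xy: "x \<in> V" "y \<in> V" using edge_ends assms by auto
  have "rpath y = rpath x @ [y]"
  proof (rule tpath_eqI)
    show "is_vpath E (rpath x @ [y])"
      using is_vpath_rpath[OF xy(1)] last_rpath[OF xy(1)] assms unfolding is_vpath_iff_successively anc_def
      by (auto simp: successively_append_iff)
  qed (use hd_rpath[OF xy(1)] rpath_nonempty[OF xy(1)] in auto)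
  moreover have "y \<noteq> r" using assms(2) root_anc xy by blast
  ultimately show ?thesis
    using rpath_parent[of y] parent_in_V[of y] last_rpath xy by (metis append1_eq_conv)
qed

lemma edge_parent_cases:
  assumes "{x, y} \<in> E"
  shows "(y \<noteq> r \<and> parent y = x) \<or> (x \<noteq> r \<and> parent x = y)"
proof -
  have "x \<in> V" "x \<noteq> y" using edge_ends assms by auto
  moreover have "{y, x} \<in> E" using assms by (simp add: insert_commute)
  ultimately show ?thesis
    using edge_parent_if_not_anc assms anc_antisym by metis
qed

lemma parent_edge_inj: "inj_on parent_edge (V - {r})"
proof (rule inj_onI)
  fix v w assume v: "v \<in> V - {r}" and w: "w \<in> V - {r}" and eq: "parent_edge v = parent_edge w"
  show "v = w"
  proof (rule ccontr)
    assume "v \<noteq> w"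
    then have "parent v = w" "parent w = v"
      using eq unfolding parent_edge_def by (auto simp: doubleton_eq_iff)
    moreover have "depth E r (parent v) = depth E r v - 1" "depth E r (parent w) = depth E r w - 1"
      "2 \<le> depth E r v"
      using depth_parent depth_ge_2 v w by auto
    ultimately show False by simp
  qed
qed

subsection \<open>Walks and tree paths\<close>

lemma walk_has_top:
  assumes "successively (\<lambda>x y. {x, y} \<in> E) q" "q \<noteq> []" "set q \<subseteq> V"
  shows "\<exists>a\<in>set q. \<forall>w\<in>set q. a \<preceq> w"
  using assms
proof (induction q)
  case Nil
  then show ?case by simp
next
  case (Cons x q)
  show ?case
  proof (cases "q = []")
    case True
    then show ?thesis using Cons.prems anc_refl by auto
  next
    case False
    then obtain a where a: "a \<in> set q" "\<forall>w\<in>set q. a \<preceq> w"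
      using Cons by (auto simp: successively_Cons)
    define h where "h = hd q"
    have h: "h \<in> set q" "{x, h} \<in> E" using Cons.prems(1) False unfolding h_def by (cases q; auto)+
    have V: "x \<in> V" "h \<in> V" "set q \<subseteq> V" using edge_ends h Cons.prems(3) by auto
    from edge_parent_cases[OF h(2)] show ?thesis
    proof
      assume c: "h \<noteq> r \<and> parent h = x"
      show ?thesis
      proof (cases "a = h")
        case True
        have "x \<preceq> h" using parent_anc[of h] c V by simp
        then have "\<forall>w\<in>set q. x \<preceq> w" using a True anc_trans V by blast
        then show ?thesis using anc_refl V by auto
      next
        case False
        then have "a \<preceq> x" using anc_parent[of h a] c a h V by simp
        then show ?thesis using a by auto
      qed
    next
      assume c: "x \<noteq> r \<and> parent x = h"
      have "a \<preceq> h" using a h by blast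
      moreover have "h \<preceq> x" using parent_anc[of x] c V by simp
      ultimately have "a \<preceq> x" using anc_trans V by blast
      then show ?thesis using a by auto
    qed
  qed
qed

lemma walk_convex_last:
  assumes "successively (\<lambda>x y. {x, y} \<in> E) q" "q \<noteq> []" "set q \<subseteq> V" "last q = a"
    and "z \<in> set q" "a \<preceq> w" "w \<preceq> z"
  shows "w \<in> set q"
  using assms
proof (induction q arbitrary: z)
  case Nil
  then show ?case by simp
next
  case (Cons x q)
  show ?case
  proof (cases "q = []")
    case True
    then have "z = a" "a \<in> V" using Cons.prems by auto
    then show ?thesis using anc_antisym[of a w] Cons.prems(4,6,7) True by simp
  next
    case False
    have IH: "\<And>z. z \<in> set q \<Longrightarrow> w \<preceq> z \<Longrightarrow> w \<in> set q"
      using Cons.IH Cons.prems False by (auto simp: successively_Cons)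
    show ?thesis
    proof (cases "z \<in> set q")
      case True
      then show ?thesis using IH Cons.prems by simp
    next
      case False
      then have zx: "z = x" using Cons.prems by simp
      define h where "h = hd q"
      have h: "h \<in> set q" "{x, h} \<in> E"
        using Cons.prems(1) \<open>q \<noteq> []\<close> unfolding h_def by (cases q; auto)+
      have V: "x \<in> V" "h \<in> V" using edge_ends h by auto
      from edge_parent_cases[OF h(2)] show ?thesis
      proof
        assume "h \<noteq> r \<and> parent h = x"
        then have "x \<preceq> h" using parent_anc[OF V(2)] by simp
        then have "w \<preceq> h" using anc_trans V Cons.prems zx by blast
        then show ?thesis using IH h by simp
      next
        assume "x \<noteq> r \<and> parent x = h"
        then have "w = x \<or> w \<preceq> h" using anc_parent[OF V(1)] Cons.prems zx by blast
        then show ?thesis using IH h by auto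
      qed
    qed
  qed
qed

lemma walk_convex:
  assumes "successively (\<lambda>x y. {x, y} \<in> E) q" "set q \<subseteq> V" "z \<in> set q" "a \<in> set q"
    and "a \<preceq> w" "w \<preceq> z"
  shows "w \<in> set q"
proof -
  obtain q1 q2 where q: "q = q1 @ a # q2" using assms(4) split_list by metis
  show ?thesis
  proof (cases "z \<in> set (q1 @ [a])")
    case True
    have "successively (\<lambda>x y. {x, y} \<in> E) (q1 @ [a])"
      using assms(1) q successively_append_iff[of _ "q1 @ [a]" q2] by simp
    then show ?thesis using walk_convex_last[of "q1 @ [a]" a z w] True assms q by auto
  next
    case False
    then have z: "z \<in> set (rev (a # q2))" using assms(3) q by auto
    have "successively (\<lambda>x y. {x, y} \<in> E) (a # q2)"
      using assms(1) q by (simp add: successively_append_iff)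
    then have "successively (\<lambda>x y. {x, y} \<in> E) (rev (a # q2))"
      unfolding successively_rev by (simp add: insert_commute)
    then show ?thesis using walk_convex_last[of "rev (a # q2)" a z w] z assms q by auto
  qed
qed

lemma vpath_edge_nth:
  assumes "is_vpath E q" "i < j" "j < length q" "{q ! i, q ! j} \<in> E"
  shows "j = Suc i"
proof (rule ccontr)
  assume "j \<noteq> Suc i"
  define c where "c = take (Suc (j - i)) (drop i q)"
  have "is_vpath E c" unfolding c_def by (rule is_vpath_take[OF is_vpath_drop]) (use assms in auto)
  moreover have "3 \<le> length c" unfolding c_def using assms \<open>j \<noteq> Suc i\<close> by auto
  moreover have "hd c = q ! i" unfolding c_def using assms by (simp add: hd_drop_conv_nth)
  moreover have "last c = q ! j" unfolding c_def using assms last_take_Suc[of "j - i" "drop i q"] by simp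
  ultimately show False using tree_acyclic assms(4) by (metis insert_commute)
qed

lemma path_edges_subset_parent_edges:
  assumes "is_vpath E q" "set q \<subseteq> V" "\<forall>w\<in>set q. a \<preceq> w"
  shows "path_edges q \<subseteq> parent_edge ` (set q - {a})"
proof
  fix e assume "e \<in> path_edges q"
  then obtain i where i: "e = {q ! i, q ! Suc i}" "Suc i < length q" unfolding path_edges_def by blast
  have "e \<in> E" using i assms(1) unfolding is_vpath_def by blast
  have inq: "q ! i \<in> set q" "q ! Suc i \<in> set q" using i by auto
  have not_top: "w \<noteq> a" if w: "w \<in> set q" "w \<noteq> r" "parent w \<in> set q" for w
  proof
    assume "w = a"
    moreover have "w \<in> V" using w assms(2) by blast
    moreover have "a \<preceq> parent w" using assms(3) w by blast
    ultimately show False using parent_anc parent_neq anc_antisym w(2) by blast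
  qed
  from edge_parent_cases[of "q ! i" "q ! Suc i"] \<open>e \<in> E\<close> i(1)
  consider "q ! Suc i \<noteq> r" "parent (q ! Suc i) = q ! i" | "q ! i \<noteq> r" "parent (q ! i) = q ! Suc i"
    by blast
  then show "e \<in> parent_edge ` (set q - {a})"
  proof cases
    case 1
    then have "e = parent_edge (q ! Suc i)" "q ! Suc i \<noteq> a"
      using i(1) inq not_top unfolding parent_edge_def by auto
    then show ?thesis using inq by blast
  next
    case 2
    then have "e = parent_edge (q ! i)" "q ! i \<noteq> a"
      using i(1) inq not_top unfolding parent_edge_def by (auto simp: insert_commute)
    then show ?thesis using inq by blast
  qed
qed

lemma parent_edges_subset_path_edges:
  assumes "is_vpath E q" "set q \<subseteq> V" "a \<in> set q" "\<forall>w\<in>set q. a \<preceq> w"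
  shows "parent_edge ` (set q - {a}) \<subseteq> path_edges q"
proof
  fix e assume "e \<in> parent_edge ` (set q - {a})"
  then obtain w where w: "e = parent_edge w" "w \<in> set q" "w \<noteq> a" by blast
  have wV: "w \<in> V" using w assms(2) by blast
  have wr: "w \<noteq> r" using assms(4) w anc_root by blast
  have "a \<preceq> parent w" using anc_parent[OF wV wr] assms(4) w by blast
  then have "parent w \<in> set q"
    using walk_convex[of q w a "parent w"] assms w parent_anc[OF wV wr]
    unfolding is_vpath_iff_successively by blast
  then obtain i where i: "i < length q" "q ! i = parent w" by (auto simp: in_set_conv_nth)
  obtain j where j: "j < length q" "q ! j = w" using w(2) by (auto simp: in_set_conv_nth)
  have "i \<noteq> j" using i j parent_neq[OF wV wr] by auto
  moreover have "{q ! i, q ! j} \<in> E" "{q ! j, q ! i} \<in> E"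
    using parent_edge_in_E[OF wV wr] i j unfolding parent_edge_def by (auto simp: insert_commute)
  ultimately have "j = Suc i \<or> i = Suc j"
    using vpath_edge_nth[OF assms(1)] i(1) j(1) by (cases "i < j") auto
  then show "e \<in> path_edges q"
    using i j unfolding path_edges_def w(1) parent_edge_def by (auto simp: insert_commute)
qed

lemma path_edges_rev_subset: "path_edges (rev p) \<subseteq> path_edges p"
proof
  fix e assume "e \<in> path_edges (rev p)"
  then obtain i where i: "e = {rev p ! i, rev p ! Suc i}" "Suc i < length p"
    unfolding path_edges_def by auto
  define j where "j = length p - Suc (Suc i)"
  have j: "Suc j = length p - Suc i" "Suc j < length p" using i(2) unfolding j_def by arith+
  have "rev p ! i = p ! Suc j" "rev p ! Suc i = p ! j"
    using i(2) j(1) unfolding j_def by (simp_all add: rev_nth)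
  then have "e = {p ! j, p ! Suc j}" using i(1) by auto
  then show "e \<in> path_edges p" unfolding path_edges_def using j(2) by blast
qed

lemma path_edges_rev: "path_edges (rev p) = path_edges p"
  using path_edges_rev_subset[of p] path_edges_rev_subset[of "rev p"] by auto

subsection \<open>The vertices and edges of a link\<close>

lemma Union_doubleton_sym:
  assumes "f y x = f x y"
  shows "\<Union>{f x' y' | x' y'. {x, y} = {x', y'}} = f x y"
proof -
  have "{f x' y' | x' y'. {x, y} = {x', y'}} = {f x y}"
    using assms by (auto simp: doubleton_eq_iff)
  then show ?thesis by simp
qed

lemma Vl_doubleton: "x \<in> V \<Longrightarrow> y \<in> V \<Longrightarrow> Vl E {x, y} = set (tpath E x y)"
  unfolding Vl_def by (rule Union_doubleton_sym) (simp add: tpath_rev[of x y])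

lemma Pl_doubleton: "x \<in> V \<Longrightarrow> y \<in> V \<Longrightarrow> Pl E {x, y} = path_edges (tpath E x y)"
  unfolding Pl_def by (rule Union_doubleton_sym) (simp add: tpath_rev[of x y] path_edges_rev)

definition vertex_pair :: "'a set \<Rightarrow> bool" where
  "vertex_pair l \<longleftrightarrow> (\<exists>x y. l = {x, y} \<and> x \<in> V \<and> y \<in> V)"

lemma vertex_pair_tpath:
  assumes "vertex_pair l"
  obtains x y where "x \<in> V" "y \<in> V" "Vl E l = set (tpath E x y)" "Pl E l = path_edges (tpath E x y)"
proof -
  obtain x y where l: "l = {x, y}" "x \<in> V" "y \<in> V" using assms unfolding vertex_pair_def by blast
  then show ?thesis using that Vl_doubleton Pl_doubleton by simp
qed

lemma apex_eqI:
  assumes "a \<in> Vl E l" "\<forall>w\<in>Vl E l. a \<preceq> w" "Vl E l \<subseteq> V"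
  shows "apex E r l = a"
  unfolding apex_def
proof (rule the_equality)
  show "a \<in> Vl E l \<and> (\<forall>y\<in>Vl E l. depth E r a \<le> depth E r y)" using assms depth_anc_le by blast
next
  fix x assume x: "x \<in> Vl E l \<and> (\<forall>y\<in>Vl E l. depth E r x \<le> depth E r y)"
  then have "a \<preceq> x" "depth E r x \<le> depth E r a" "x \<in> V" using assms by auto
  then show "x = a" using anc_eq_if_depth_eq[of x a] depth_anc_le[of x a] by simp
qed

lemma Vl_subset_V:
  assumes "vertex_pair l"
  shows "Vl E l \<subseteq> V"
proof (rule vertex_pair_tpath[OF assms])
  fix x y assume "x \<in> V" "y \<in> V" "Vl E l = set (tpath E x y)"
  then show ?thesis using set_tpath_subset[of x y] by simp
qed

lemma
  assumes "vertex_pair l"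
  shows apex_in_Vl: "apex E r l \<in> Vl E l"
    and apex_anc: "w \<in> Vl E l \<Longrightarrow> apex E r l \<preceq> w"
proof -
  obtain x y where xy: "x \<in> V" "y \<in> V" and Vl: "Vl E l = set (tpath E x y)"
    and "Pl E l = path_edges (tpath E x y)"
    using vertex_pair_tpath[OF assms] .
  have "successively (\<lambda>x y. {x, y} \<in> E) (tpath E x y)" "tpath E x y \<noteq> []"
    using is_vpath_tpath[OF xy] unfolding is_vpath_iff_successively by auto
  from walk_has_top[OF this set_tpath_subset[OF xy]]
  obtain a where a: "a \<in> Vl E l" "\<forall>w\<in>Vl E l. a \<preceq> w" unfolding Vl by blast
  moreover have "apex E r l = a" using apex_eqI[OF a] Vl_subset_V[OF assms] .
  ultimately show "apex E r l \<in> Vl E l" "w \<in> Vl E l \<Longrightarrow> apex E r l \<preceq> w" by auto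
qed

lemma Vl_interval:
  assumes "vertex_pair l" "z \<in> Vl E l" "apex E r l \<preceq> w" "w \<preceq> z"
  shows "w \<in> Vl E l"
proof -
  obtain x y where xy: "x \<in> V" "y \<in> V" and Vl: "Vl E l = set (tpath E x y)"
    and "Pl E l = path_edges (tpath E x y)"
    using vertex_pair_tpath[OF assms(1)] .
  have "successively (\<lambda>x y. {x, y} \<in> E) (tpath E x y)"
    using is_vpath_tpath[OF xy] unfolding is_vpath_iff_successively by auto
  from walk_convex[OF this set_tpath_subset[OF xy]] show ?thesis
    using apex_in_Vl[OF assms(1)] assms(2-4) unfolding Vl by blast
qed

lemma Pl_eq_parent_edges:
  assumes "vertex_pair l"
  shows "Pl E l = parent_edge ` (Vl E l - {apex E r l})"
proof -
  obtain x y where xy: "x \<in> V" "y \<in> V" and Vl: "Vl E l = set (tpath E x y)"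
    and Pl: "Pl E l = path_edges (tpath E x y)"
    using vertex_pair_tpath[OF assms] .
  note q = is_vpath_tpath[OF xy] set_tpath_subset[OF xy]
  have a: "apex E r l \<in> set (tpath E x y)" "\<forall>w\<in>set (tpath E x y). apex E r l \<preceq> w"
    using apex_in_Vl[OF assms] apex_anc[OF assms] unfolding Vl by auto
  show ?thesis
    using path_edges_subset_parent_edges[OF q a(2)] parent_edges_subset_path_edges[OF q a]
    unfolding Pl Vl by (rule equalityI)
qed

subsection \<open>Up-links\<close>

lemma rpath_nth_depth:
  assumes "b \<in> V" "w \<preceq> b"
  shows "rpath b ! (depth E r w - 1) = w"
proof -
  have "w \<in> V" using anc_subset_V assms by blast
  then have "last (rpath w) = w" "Suc (depth E r w - 1) = depth E r w"
    using last_rpath depth_pos[of w] by auto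
  moreover have "depth E r w \<le> depth E r b" using depth_anc_le assms by blast
  ultimately show ?thesis
    using rpath_anc[OF assms] last_take_Suc[of "depth E r w - 1" "rpath b"] unfolding depth_def by simp
qed

lemma anc_iff_rpath_nth: "w \<preceq> b \<longleftrightarrow> (\<exists>i < depth E r b. rpath b ! i = w)"
  unfolding anc_def depth_def by (auto simp: in_set_conv_nth)

lemma tpath_anc:
  assumes "b \<in> V" "t \<preceq> b"
  shows "tpath E t b = drop (depth E r t - 1) (rpath b)"
proof (rule tpath_eqI)
  have "t \<in> V" using anc_subset_V assms by blast
  then have d: "1 \<le> depth E r t" "depth E r t \<le> depth E r b" using depth_pos depth_anc_le assms by auto
  then show "is_vpath E (drop (depth E r t - 1) (rpath b))"
    by (intro is_vpath_drop[OF is_vpath_rpath[OF assms(1)]]) (simp add: depth_def)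
  show "hd (drop (depth E r t - 1) (rpath b)) = t"
    using rpath_nth_depth[OF assms] d unfolding depth_def by (simp add: hd_drop_conv_nth)
  show "last (drop (depth E r t - 1) (rpath b)) = b"
    using last_rpath[OF assms(1)] d unfolding depth_def by simp
qed

lemma Vl_anc_pair:
  assumes "b \<in> V" "t \<preceq> b"
  shows "Vl E {t, b} = {w. t \<preceq> w \<and> w \<preceq> b}"
proof -
  have tV: "t \<in> V" using anc_subset_V assms by blast
  have "w \<in> Vl E {t, b} \<longleftrightarrow> (\<exists>i < depth E r b. depth E r t - 1 \<le> i \<and> rpath b ! i = w)" for w
    unfolding Vl_doubleton[OF tV assms(1)] tpath_anc[OF assms] in_set_drop_iff depth_def ..
  also have "\<dots> w \<longleftrightarrow> t \<preceq> w \<and> w \<preceq> b" for w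
  proof
    assume "\<exists>i < depth E r b. depth E r t - 1 \<le> i \<and> rpath b ! i = w"
    then obtain i where i: "i < depth E r b" "depth E r t - 1 \<le> i" "rpath b ! i = w" by blast
    then have wb: "w \<preceq> b" using anc_iff_rpath_nth by blast
    have d: "depth E r t \<le> depth E r w" using i depth_rpath_nth[OF assms(1) i(1)] by simp
    have "t \<preceq> w"
    proof (cases "w \<preceq> t")
      case True
      then have "w = t" using anc_eq_if_depth_eq[OF tV True] depth_anc_le[OF tV True] d by simp
      then show ?thesis using anc_refl tV by simp
    next
      case False
      then show ?thesis using anc_linear[OF assms(1) wb assms(2)] by blast
    qed
    with wb show "t \<preceq> w \<and> w \<preceq> b" by blast
  next
    assume tw: "t \<preceq> w \<and> w \<preceq> b"
    then have "w \<in> V" "depth E r t \<le> depth E r w" "depth E r w \<le> depth E r b" "1 \<le> depth E r t"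
      using anc_subset_V assms depth_anc_le depth_pos tV by blast+
    then show "\<exists>i < depth E r b. depth E r t - 1 \<le> i \<and> rpath b ! i = w"
      using rpath_nth_depth[OF assms(1)] tw by (intro exI[of _ "depth E r w - 1"]) auto
  qed
  finally show ?thesis by blast
qed

lemma apex_anc_pair:
  assumes "b \<in> V" "t \<preceq> b"
  shows "apex E r {t, b} = t"
proof (rule apex_eqI)
  have "t \<in> V" using anc_subset_V assms by blast
  then show "t \<in> Vl E {t, b}" "\<forall>w\<in>Vl E {t, b}. t \<preceq> w"
    using anc_refl assms unfolding Vl_anc_pair[OF assms] by auto
  show "Vl E {t, b} \<subseteq> V" using anc_subset_V[OF assms(1)] unfolding Vl_anc_pair[OF assms] by blast
qed

lemma
  assumes "b \<in> V" "t \<preceq> b" "t \<noteq> b"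
  shows up_top_eq: "up_top E r {t, b} = t"
    and up_bot_eq: "up_bot E r {t, b} = b"
proof -
  have uniq: "t' = t \<and> b' = b" if "{t, b} = {t', b'}" "t' \<preceq> b'" for t' b'
    using that assms anc_antisym by (auto simp: doubleton_eq_iff)
  show "up_top E r {t, b} = t" unfolding up_top_def
    by (rule the_equality) (use assms uniq in blast)+
  show "up_bot E r {t, b} = b" unfolding up_bot_def
    by (rule the_equality) (use assms uniq in blast)+
qed

lemma
  assumes "b \<in> V" "t \<preceq> b" "Suc i < length (tpath E t b)"
  shows tpath_anc_edge: "{tpath E t b ! i, tpath E t b ! Suc i} = parent_edge (tpath E t b ! Suc i)"
    and tpath_anc_nth_in: "tpath E t b ! Suc i \<in> V - {r}"
    and depth_tpath_anc_nth: "depth E r (tpath E t b ! Suc i) = depth E r t + Suc i"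
proof -
  define k where "k = depth E r t - 1"
  have "t \<in> V" using anc_subset_V assms by blast
  then have k: "Suc k = depth E r t" using depth_pos[of t] unfolding k_def by simp
  have lt: "Suc (k + i) < depth E r b"
    using assms(3) unfolding tpath_anc[OF assms(1,2)] k_def depth_def by simp
  have nth: "tpath E t b ! i = rpath b ! (k + i)" "tpath E t b ! Suc i = rpath b ! Suc (k + i)"
    unfolding tpath_anc[OF assms(1,2)] k_def[symmetric] using lt unfolding depth_def by auto
  have d: "depth E r (rpath b ! Suc (k + i)) = Suc (Suc (k + i))" using depth_rpath_nth[OF assms(1) lt] .
  show "{tpath E t b ! i, tpath E t b ! Suc i} = parent_edge (tpath E t b ! Suc i)"
    unfolding nth parent_edge_def parent_rpath_nth[OF assms(1) lt] ..
  show "depth E r (tpath E t b ! Suc i) = depth E r t + Suc i" using nth d k by simp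
  have "rpath b ! Suc (k + i) \<in> V" using anc_subset_V[OF assms(1)] anc_iff_rpath_nth lt by blast
  moreover have "rpath b ! Suc (k + i) \<noteq> r" using d depth_root by auto
  ultimately show "tpath E t b ! Suc i \<in> V - {r}" using nth by simp
qed

end

locale wtap_dependency = rooted_tree +
  fixes L F U :: "'a set set" and Fsel :: "'a set \<Rightarrow> 'a set set"
  assumes links: "L \<subseteq> {{x, y} | x y. x \<in> V \<and> y \<in> V \<and> x \<noteq> y}"
    and F_subset_L: "F \<subseteq> L" and F_covers: "\<Union>(Pl E ` F) = E"
    and U_up: "U \<subseteq> L_up E r L"
    and U_disjoint: "\<forall>u\<in>U. \<forall>u'\<in>U. u \<noteq> u' \<longrightarrow> Pl E u \<inter> Pl E u' = {}"
    and Fsel_valid: "\<forall>u\<in>U. valid_Fu V E r F u (Fsel u)"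
begin

abbreviation utop :: "'a set \<Rightarrow> 'a" where
  "utop u \<equiv> up_top E r u"

abbreviation ubot :: "'a set \<Rightarrow> 'a" where
  "ubot u \<equiv> up_bot E r u"

text \<open>An edge of the tree is represented by its endpoint farther from the root, so that
  \<open>P\<^sub>l\<close> corresponds to \<open>lower_ends l\<close> and \<open>P\<^sub>u\<^sub>,\<^sub>l\<close> to \<open>own_ends u F\<^sub>u l\<close>.\<close>

definition lower_ends :: "'a set \<Rightarrow> 'a set" where
  "lower_ends l = Vl E l - {apex E r l}"

definition own_ends :: "'a set \<Rightarrow> 'a set set \<Rightarrow> 'a set \<Rightarrow> 'a set" where
  "own_ends u S l = lower_ends u - \<Union>(lower_ends ` (S - {l}))"

definition prec_depth :: "'a set \<Rightarrow> 'a set set \<Rightarrow> 'a set \<Rightarrow> 'a set \<Rightarrow> bool" where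
  "prec_depth u S l1 l2 \<longleftrightarrow>
     (\<forall>w1\<in>own_ends u S l1. \<forall>w2\<in>own_ends u S l2. depth E r w1 < depth E r w2)"

lemma vertex_pair_L: "l \<in> L \<Longrightarrow> vertex_pair l"
  using links unfolding vertex_pair_def by blast

lemma vertex_pair_F: "l \<in> F \<Longrightarrow> vertex_pair l"
  using F_subset_L vertex_pair_L by blast

lemma lower_ends_subset:
  assumes "vertex_pair l"
  shows "lower_ends l \<subseteq> V - {r}"
proof
  fix w assume w: "w \<in> lower_ends l"
  then have "w \<in> V" "apex E r l \<preceq> w" "apex E r l \<noteq> w"
    using Vl_subset_V[OF assms] apex_anc[OF assms] unfolding lower_ends_def by auto
  then show "w \<in> V - {r}" using anc_root by blast
qed

lemma Pl_lower_ends: "vertex_pair l \<Longrightarrow> Pl E l = parent_edge ` lower_ends l"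
  using Pl_eq_parent_edges unfolding lower_ends_def by blast

lemma apex_anc_lower_ends:
  "vertex_pair l \<Longrightarrow> w \<in> lower_ends l \<Longrightarrow> apex E r l \<preceq> w \<and> apex E r l \<noteq> w"
  using apex_anc unfolding lower_ends_def by blast

lemma lower_ends_interval:
  assumes "vertex_pair l" "w1 \<in> lower_ends l" "w3 \<in> lower_ends l" "w1 \<preceq> w2" "w2 \<preceq> w3"
  shows "w2 \<in> lower_ends l"
proof -
  have w3V: "w3 \<in> V" using lower_ends_subset assms by blast
  have w2V: "w2 \<in> V" using anc_subset_V[OF w3V] assms(5) by blast
  have a1: "apex E r l \<preceq> w1" "apex E r l \<noteq> w1" using apex_anc_lower_ends assms by auto
  have "apex E r l \<preceq> w2" using anc_trans[OF w2V assms(4) a1(1)] .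
  moreover have "w3 \<in> Vl E l" using assms unfolding lower_ends_def by blast
  ultimately have "w2 \<in> Vl E l" using Vl_interval[OF assms(1)] assms(5) by blast
  moreover have "w2 \<noteq> apex E r l" using anc_antisym[OF w2V assms(4)] a1 by blast
  ultimately show ?thesis unfolding lower_ends_def by blast
qed

lemma
  assumes "u \<in> U"
  shows up_link_eq: "u = {utop u, ubot u}"
    and ubot_in_V: "ubot u \<in> V"
    and utop_anc_ubot: "utop u \<preceq> ubot u"
    and up_link_in_L: "u \<in> L"
proof -
  have uL: "u \<in> L" and up: "is_up_link E r u" using U_up assms unfolding L_up_def by auto
  obtain t b where tb: "u = {t, b}" "t \<noteq> b" "t \<preceq> b" using up unfolding is_up_link_def by blast
  obtain x y where "u = {x, y}" "x \<in> V" "y \<in> V" using uL links by blast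
  then have bV: "b \<in> V" using tb by (auto simp: doubleton_eq_iff)
  show "u = {utop u, ubot u}" "ubot u \<in> V" "utop u \<preceq> ubot u" "u \<in> L"
    using up_top_eq[OF bV tb(3) tb(2)] up_bot_eq[OF bV tb(3) tb(2)] tb bV uL by auto
qed

lemma vertex_pair_up: "u \<in> U \<Longrightarrow> vertex_pair u"
  using up_link_in_L vertex_pair_L by blast

lemma lower_ends_up:
  assumes "u \<in> U"
  shows "lower_ends u = {w. utop u \<preceq> w \<and> w \<preceq> ubot u \<and> w \<noteq> utop u}"
proof -
  note bt = ubot_in_V[OF assms] utop_anc_ubot[OF assms]
  have "lower_ends u = lower_ends {utop u, ubot u}" using arg_cong[OF up_link_eq[OF assms]] .
  also have "\<dots> = {w. utop u \<preceq> w \<and> w \<preceq> ubot u} - {utop u}"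
    unfolding lower_ends_def Vl_anc_pair[OF bt] apex_anc_pair[OF bt] ..
  finally show ?thesis by blast
qed

lemma lower_ends_up_tpath:
  assumes "u \<in> U" "w \<in> lower_ends u"
  obtains i where "Suc i < length (tpath E (utop u) (ubot u))" "tpath E (utop u) (ubot u) ! Suc i = w"
proof -
  let ?p = "tpath E (utop u) (ubot u)"
  note bt = ubot_in_V[OF assms(1)] utop_anc_ubot[OF assms(1)]
  have tV: "utop u \<in> V" using anc_subset_V bt by blast
  have "w \<in> Vl E {utop u, ubot u}" "w \<noteq> utop u"
    using assms(2) unfolding lower_ends_up[OF assms(1)] Vl_anc_pair[OF bt] by auto
  then have "w \<in> set ?p" "w \<noteq> ?p ! 0"
    unfolding Vl_doubleton[OF tV bt(1)] using hd_tpath[OF tV bt(1)] is_vpath_tpath[OF tV bt(1)]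
    by (auto simp: hd_conv_nth is_vpath_def)
  then obtain j where "j < length ?p" "?p ! j = w" "j \<noteq> 0" by (auto simp: in_set_conv_nth)
  then show ?thesis using that by (cases j) auto
qed

lemma
  assumes "u \<in> U"
  shows Fsel_subset_B: "Fsel u \<subseteq> Bset V E r F (v_of V E r F u)"
    and Fsel_subset_F: "Fsel u \<subseteq> F"
    and Fsel_subset_L: "Fsel u \<subseteq> L"
    and Fsel_covers: "Pl E u \<subseteq> \<Union>(Pl E ` Fsel u)"
    and Fsel_minimal: "S' \<subset> Fsel u \<Longrightarrow> \<not> Pl E u \<subseteq> \<Union>(Pl E ` S')"
  using Fsel_valid assms F_subset_L unfolding valid_Fu_def Bset_def by blast+

lemma UN_lower_ends_subset: "S \<subseteq> L \<Longrightarrow> \<Union>(lower_ends ` S) \<subseteq> V - {r}"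
  using lower_ends_subset vertex_pair_L by blast

lemma UN_Pl_eq:
  assumes "S \<subseteq> L"
  shows "\<Union>(Pl E ` S) = parent_edge ` \<Union>(lower_ends ` S)"
proof -
  have "\<Union>(Pl E ` S) = (\<Union>l\<in>S. parent_edge ` lower_ends l)"
    using Pl_lower_ends vertex_pair_L assms by (intro SUP_cong) auto
  then show ?thesis by (simp add: image_UN)
qed

lemma Pl_subset_UN_iff:
  assumes "u \<in> L" "S \<subseteq> L"
  shows "Pl E u \<subseteq> \<Union>(Pl E ` S) \<longleftrightarrow> lower_ends u \<subseteq> \<Union>(lower_ends ` S)"
proof -
  note A = lower_ends_subset[OF vertex_pair_L[OF assms(1)]]
  note B = UN_lower_ends_subset[OF assms(2)]
  have "parent_edge ` lower_ends u \<subseteq> parent_edge ` \<Union>(lower_ends ` S) \<longleftrightarrow>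
      lower_ends u \<subseteq> \<Union>(lower_ends ` S)"
  proof
    assume h: "parent_edge ` lower_ends u \<subseteq> parent_edge ` \<Union>(lower_ends ` S)"
    show "lower_ends u \<subseteq> \<Union>(lower_ends ` S)"
    proof
      fix w assume w: "w \<in> lower_ends u"
      then have "parent_edge w \<in> parent_edge ` \<Union>(lower_ends ` S)" using h by blast
      then show "w \<in> \<Union>(lower_ends ` S)" using inj_on_image_mem_iff[OF parent_edge_inj _ B] A w by blast
    qed
  qed (rule image_mono)
  then show ?thesis
    unfolding Pl_lower_ends[OF vertex_pair_L[OF assms(1)]] UN_Pl_eq[OF assms(2)] .
qed

lemma Pul_eq_own_ends:
  assumes "u \<in> L" "S \<subseteq> L"
  shows "Pul E u S l = parent_edge ` own_ends u S l"
proof -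
  have S: "S - {l} \<subseteq> L" using assms by blast
  note A = lower_ends_subset[OF vertex_pair_L[OF assms(1)]]
  note B = UN_lower_ends_subset[OF S]
  have "parent_edge ` own_ends u S l = parent_edge ` lower_ends u - parent_edge ` \<Union>(lower_ends ` (S - {l}))"
    unfolding own_ends_def by (rule inj_on_image_set_diff[OF parent_edge_inj]) (use A B in blast)+
  then show ?thesis
    unfolding Pul_def Pl_lower_ends[OF vertex_pair_L[OF assms(1)]] UN_Pl_eq[OF S] by simp
qed

lemma lower_ends_covered:
  assumes "u \<in> U"
  shows "lower_ends u \<subseteq> \<Union>(lower_ends ` Fsel u)"
  using Pl_subset_UN_iff[OF up_link_in_L[OF assms] Fsel_subset_L[OF assms]] Fsel_covers[OF assms] by blast

lemma own_ends_nonempty: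
  assumes "u \<in> U" "l \<in> Fsel u"
  shows "own_ends u (Fsel u) l \<noteq> {}"
proof
  assume "own_ends u (Fsel u) l = {}"
  then have "lower_ends u \<subseteq> \<Union>(lower_ends ` (Fsel u - {l}))" unfolding own_ends_def by blast
  moreover have "Fsel u - {l} \<subseteq> L" using Fsel_subset_L[OF assms(1)] by blast
  ultimately have "Pl E u \<subseteq> \<Union>(Pl E ` (Fsel u - {l}))"
    using Pl_subset_UN_iff[OF up_link_in_L[OF assms(1)], of "Fsel u - {l}"] by simp
  moreover have "Fsel u - {l} \<subset> Fsel u" using assms(2) by blast
  ultimately show False using Fsel_minimal[OF assms(1)] by blast
qed

lemma own_ends_subset:
  assumes "u \<in> U" "l \<in> Fsel u"
  shows "own_ends u (Fsel u) l \<subseteq> lower_ends l" "own_ends u (Fsel u) l \<subseteq> lower_ends u"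
  using lower_ends_covered[OF assms(1)] assms unfolding own_ends_def by blast+

lemma own_ends_not_in_other: "l' \<in> S \<Longrightarrow> l' \<noteq> l \<Longrightarrow> w \<in> own_ends u S l \<Longrightarrow> w \<notin> lower_ends l'"
  unfolding own_ends_def by blast

lemma lower_ends_up_in_V: "u \<in> U \<Longrightarrow> w \<in> lower_ends u \<Longrightarrow> w \<in> V"
  using lower_ends_subset vertex_pair_up by blast

lemma lower_ends_up_chain:
  assumes "u \<in> U" "w1 \<in> lower_ends u" "w2 \<in> lower_ends u" "depth E r w1 \<le> depth E r w2"
  shows "w1 \<preceq> w2"
proof -
  have "w1 \<preceq> ubot u" "w2 \<preceq> ubot u" using lower_ends_up[OF assms(1)] assms by auto
  then have "w1 \<preceq> w2 \<or> w2 \<preceq> w1" using anc_linear ubot_in_V[OF assms(1)] by blast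
  then show ?thesis
  proof
    assume h: "w2 \<preceq> w1"
    have w1V: "w1 \<in> V" using lower_ends_up_in_V assms by blast
    have "depth E r w2 = depth E r w1" using depth_anc_le[OF w1V h] assms(4) by simp
    then have "w2 = w1" using anc_eq_if_depth_eq[OF w1V h] by simp
    then show ?thesis using anc_refl w1V by simp
  qed
qed

lemma prec_depth_total:
  assumes "u \<in> U" "l1 \<in> Fsel u" "l2 \<in> Fsel u" "l1 \<noteq> l2"
  shows "prec_depth u (Fsel u) l1 l2 \<or> prec_depth u (Fsel u) l2 l1"
proof (rule ccontr)
  let ?S = "Fsel u"
  assume "\<not> ?thesis"
  then obtain w1 w2 w1' w2' where w: "w1 \<in> own_ends u ?S l1" "w2 \<in> own_ends u ?S l2"
    "depth E r w2 \<le> depth E r w1" "w1' \<in> own_ends u ?S l1" "w2' \<in> own_ends u ?S l2"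
    "depth E r w1' \<le> depth E r w2'"
    unfolding prec_depth_def by (meson not_less)
  have lk: "vertex_pair l1" "vertex_pair l2" using Fsel_subset_L[OF assms(1)] assms vertex_pair_L by auto
  have X1: "w1 \<in> lower_ends l1" "w1' \<in> lower_ends l1" using own_ends_subset[OF assms(1,2)] w by auto
  have X2: "w2 \<in> lower_ends l2" "w2' \<in> lower_ends l2" using own_ends_subset[OF assms(1,3)] w by auto
  have N1: "w1' \<notin> lower_ends l2" using own_ends_not_in_other[OF assms(3)] assms(4) w by auto
  have N2: "w2 \<notin> lower_ends l1" using own_ends_not_in_other[OF assms(2)] assms(4) w by auto
  have U: "w1 \<in> lower_ends u" "w2 \<in> lower_ends u" "w1' \<in> lower_ends u" "w2' \<in> lower_ends u"
    using own_ends_subset[OF assms(1,2)] own_ends_subset[OF assms(1,3)] w by auto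
  have a21: "w2 \<preceq> w1" using lower_ends_up_chain[OF assms(1) U(2) U(1) w(3)] .
  have a12: "w1' \<preceq> w2'" using lower_ends_up_chain[OF assms(1) U(3) U(4) w(6)] .
  \<comment> \<open>the four vertices lie on one chain, so one of the two intervals swallows an own vertex of the other\<close>
  show False
  proof (cases "depth E r w2 \<le> depth E r w1'")
    case True
    then have "w2 \<preceq> w1'" using lower_ends_up_chain[OF assms(1) U(2) U(3)] by blast
    then show False using lower_ends_interval[OF lk(2) X2(1) X2(2) _ a12] N1 by blast
  next
    case False
    then have "w1' \<preceq> w2" using lower_ends_up_chain[OF assms(1) U(3) U(2)] by simp
    then show False using lower_ends_interval[OF lk(1) X1(2) X1(1) _ a21] N2 by blast
  qed
qed

lemma prec_u_iff_prec_depth: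
  assumes "u \<in> U" "S \<subseteq> L"
  shows "prec_u E r u S l1 l2 \<longleftrightarrow> prec_depth u S l1 l2"
proof -
  define p where "p = tpath E (utop u) (ubot u)"
  note bt = ubot_in_V[OF assms(1)] utop_anc_ubot[OF assms(1)]
  have edge: "{p ! i, p ! Suc i} = parent_edge (p ! Suc i)" "p ! Suc i \<in> V - {r}"
    "depth E r (p ! Suc i) = depth E r (utop u) + Suc i" if "Suc i < length p" for i
    using tpath_anc_edge[OF bt] tpath_anc_nth_in[OF bt] depth_tpath_anc_nth[OF bt] that
    unfolding p_def by auto
  have own: "own_ends u S l \<subseteq> lower_ends u" for l unfolding own_ends_def by blast
  have Pul: "Pul E u S l = parent_edge ` own_ends u S l" for l
    using Pul_eq_own_ends[OF up_link_in_L[OF assms(1)] assms(2)] .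
  show ?thesis
  proof
    assume H: "prec_u E r u S l1 l2"
    show "prec_depth u S l1 l2" unfolding prec_depth_def
    proof (intro ballI)
      fix w1 w2 assume w1: "w1 \<in> own_ends u S l1" and w2: "w2 \<in> own_ends u S l2"
      obtain i where i: "Suc i < length p" "p ! Suc i = w1"
        using lower_ends_up_tpath[OF assms(1)] own w1 unfolding p_def by blast
      obtain j where j: "Suc j < length p" "p ! Suc j = w2"
        using lower_ends_up_tpath[OF assms(1)] own w2 unfolding p_def by blast
      have "{p ! i, p ! Suc i} \<in> Pul E u S l1" "{p ! j, p ! Suc j} \<in> Pul E u S l2"
        using Pul w1 w2 edge(1) i j by auto
      then have "i < j" using H i(1) j(1) unfolding prec_u_def Let_def p_def by blast
      then show "depth E r w1 < depth E r w2" using edge(3) i j by auto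
    qed
  next
    assume H: "prec_depth u S l1 l2"
    show "prec_u E r u S l1 l2" unfolding prec_u_def Let_def p_def[symmetric]
    proof (intro ballI allI impI)
      fix e1 e2 i j
      assume e: "e1 \<in> Pul E u S l1" "e2 \<in> Pul E u S l2" "Suc i < length p" "Suc j < length p"
        "e1 = {p ! i, p ! Suc i}" "e2 = {p ! j, p ! Suc j}"
      obtain w1 where w1: "w1 \<in> own_ends u S l1" "e1 = parent_edge w1" using e Pul by blast
      obtain w2 where w2: "w2 \<in> own_ends u S l2" "e2 = parent_edge w2" using e Pul by blast
      have "own_ends u S l1 \<subseteq> V - {r}" "own_ends u S l2 \<subseteq> V - {r}"
        using own lower_ends_subset[OF vertex_pair_up[OF assms(1)]] by blast+
      moreover have "parent_edge w1 = parent_edge (p ! Suc i)" "parent_edge w2 = parent_edge (p ! Suc j)"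
        using edge(1) e(3-6) w1(2) w2(2) by auto
      ultimately have "w1 = p ! Suc i" "w2 = p ! Suc j"
        using inj_onD[OF parent_edge_inj] edge(2) e(3,4) w1(1) w2(1) by blast+
      moreover have "depth E r w1 < depth E r w2" using H w1 w2 unfolding prec_depth_def by blast
      ultimately show "i < j" using edge(3) e(3,4) by auto
    qed
  qed
qed

lemma A_u_iff:
  assumes "u \<in> U"
  shows "(m, c) \<in> A_u E r u (Fsel u) \<longleftrightarrow> m \<in> Fsel u \<and> c \<in> Fsel u \<and> m \<noteq> c \<and>
    prec_depth u (Fsel u) m c \<and>
    \<not> (\<exists>l\<in>Fsel u. l \<noteq> m \<and> l \<noteq> c \<and> prec_depth u (Fsel u) m l \<and> prec_depth u (Fsel u) l c)"
  unfolding A_u_def using prec_u_iff_prec_depth[OF assms Fsel_subset_L[OF assms]] by simp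

lemma own_endE:
  assumes "u \<in> U" "l \<in> Fsel u"
  obtains e where "e \<in> own_ends u (Fsel u) l" "e \<in> lower_ends u" "e \<in> lower_ends l" "apex E r l \<preceq> e"
proof -
  obtain e where e: "e \<in> own_ends u (Fsel u) l" using own_ends_nonempty[OF assms] by blast
  moreover have "e \<in> lower_ends u" "e \<in> lower_ends l" using own_ends_subset[OF assms] e by auto
  moreover have "vertex_pair l" using Fsel_subset_L[OF assms(1)] assms(2) vertex_pair_L by blast
  ultimately show ?thesis using that apex_anc_lower_ends by blast
qed

lemma up_links_eq_if_common_lower_end:
  assumes "u \<in> U" "u' \<in> U" "w \<in> lower_ends u" "w \<in> lower_ends u'"
  shows "u = u'"
proof -
  have "parent_edge w \<in> Pl E u \<inter> Pl E u'"
    using assms Pl_lower_ends[OF vertex_pair_up[OF assms(1)]] Pl_lower_ends[OF vertex_pair_up[OF assms(2)]]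
    by blast
  then show ?thesis using U_disjoint assms(1,2) by blast
qed

lemma A_u_in_Fsel: "(m, c) \<in> A_u E r u S \<Longrightarrow> m \<in> S \<and> c \<in> S"
  unfolding A_u_def by blast

lemma own_ends_anc_arc_apex:
  assumes u: "u \<in> U" and mc: "(m, c) \<in> A_u E r u (Fsel u)" and g: "g \<in> own_ends u (Fsel u) m"
  shows "g \<preceq> apex E r c"
proof -
  have mS: "m \<in> Fsel u" and cS: "c \<in> Fsel u" and "m \<noteq> c" and pmc: "prec_depth u (Fsel u) m c"
    using A_u_iff[OF u] mc by auto
  have lkc: "vertex_pair c" using cS Fsel_subset_L[OF u] vertex_pair_L by blast
  obtain e where e: "e \<in> own_ends u (Fsel u) c" "e \<in> lower_ends u" "e \<in> lower_ends c" "apex E r c \<preceq> e"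
    using own_endE[OF u cS] by blast
  have gU: "g \<in> lower_ends u" using own_ends_subset[OF u mS] g by blast
  have V: "g \<in> V" "e \<in> V" using lower_ends_up_in_V[OF u] gU e(2) by auto
  have "depth E r g < depth E r e" using pmc g e(1) unfolding prec_depth_def by blast
  then have ge: "g \<preceq> e" using lower_ends_up_chain[OF u gU e(2)] by simp
  from anc_linear[OF V(2) e(4) ge] show ?thesis
  proof
    assume sg: "apex E r c \<preceq> g"
    show ?thesis
    proof (rule ccontr)
      assume "\<not> g \<preceq> apex E r c"
      then have "g \<noteq> apex E r c" using anc_refl V(1) by blast
      moreover have "g \<in> Vl E c" using Vl_interval[OF lkc _ sg ge] e(3) unfolding lower_ends_def by blast
      ultimately have "g \<in> lower_ends c" unfolding lower_ends_def by blast
      then show False using own_ends_not_in_other[OF cS \<open>m \<noteq> c\<close>[symmetric] g] by blast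
    qed
  qed
qed

lemma arc_apex_in_lower_ends_up:
  assumes u: "u \<in> U" and mc: "(m, c) \<in> A_u E r u (Fsel u)"
  shows "apex E r c \<in> lower_ends u"
proof -
  have mS: "m \<in> Fsel u" and cS: "c \<in> Fsel u" using A_u_in_Fsel[OF mc] by auto
  obtain e where e: "e \<in> lower_ends u" "apex E r c \<preceq> e"
    using own_endE[OF u cS] by blast
  obtain g where g: "g \<in> own_ends u (Fsel u) m" using own_ends_nonempty[OF u mS] by blast
  have gs: "g \<preceq> apex E r c" using own_ends_anc_arc_apex[OF u mc g] .
  have bV: "ubot u \<in> V" using ubot_in_V[OF u] .
  have tg: "utop u \<preceq> g" "g \<noteq> utop u" and eb: "e \<preceq> ubot u"
    using own_ends_subset(2)[OF u mS] g e(1) unfolding lower_ends_up[OF u] by auto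
  have sb: "apex E r c \<preceq> ubot u" using anc_trans[OF bV eb e(2)] .
  have sV: "apex E r c \<in> V" using anc_subset_V[OF bV] sb by blast
  have "utop u \<preceq> apex E r c" using anc_trans[OF sV gs tg(1)] .
  moreover have "apex E r c \<noteq> utop u"
  proof
    assume "apex E r c = utop u"
    moreover have "g \<in> V" using lower_ends_up_in_V[OF u] own_ends_subset(2)[OF u mS] g by blast
    ultimately show False using anc_antisym[OF _ tg(1)] gs tg(2) by auto
  qed
  ultimately show ?thesis unfolding lower_ends_up[OF u] using sb by blast
qed

lemma arc_apex_in_lower_ends_tail:
  assumes u: "u \<in> U" and mc: "(m, c) \<in> A_u E r u (Fsel u)"
  shows "apex E r c \<in> lower_ends m"
proof (rule ccontr)
  let ?S = "Fsel u" and ?s = "apex E r c"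
  assume nsm: "?s \<notin> lower_ends m"
  have mS: "m \<in> ?S" and cS: "c \<in> ?S" and mnc: "m \<noteq> c"
    and nb: "\<not> (\<exists>l\<in>?S. l \<noteq> m \<and> l \<noteq> c \<and> prec_depth u ?S m l \<and> prec_depth u ?S l c)"
    using A_u_iff[OF u] mc by auto
  obtain l where lS: "l \<in> ?S" and sl: "?s \<in> lower_ends l"
    using lower_ends_covered[OF u] arc_apex_in_lower_ends_up[OF u mc] by blast
  have lc: "l \<noteq> c" using sl unfolding lower_ends_def by blast
  have lm: "l \<noteq> m" using nsm sl by blast
  have lkl: "vertex_pair l" using lS Fsel_subset_L[OF u] vertex_pair_L by blast
  obtain e where e: "e \<in> own_ends u ?S c" "e \<in> lower_ends u" "?s \<preceq> e"
    using own_endE[OF u cS] by blast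
  obtain g where g: "g \<in> own_ends u ?S m" using own_ends_nonempty[OF u mS] by blast
  obtain w where w: "w \<in> own_ends u ?S l" using own_ends_nonempty[OF u lS] by blast
  have wU: "w \<in> lower_ends u" and wl: "w \<in> lower_ends l" using own_ends_subset[OF u lS] w by auto
  have gU: "g \<in> lower_ends u" using own_ends_subset[OF u mS] g by auto
  \<comment> \<open>\<open>l\<close> sits strictly between \<open>m\<close> and \<open>c\<close> in the order, contradicting that \<open>(m, c)\<close> is an arc\<close>
  have "prec_depth u ?S m l"
  proof (rule ccontr)
    assume "\<not> prec_depth u ?S m l"
    then have "prec_depth u ?S l m" using prec_depth_total[OF u mS lS lm[symmetric]] by blast
    then have "w \<preceq> g" using lower_ends_up_chain[OF u wU gU] w g unfolding prec_depth_def by fastforce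
    then have "g \<in> lower_ends l"
      using lower_ends_interval[OF lkl wl sl _ own_ends_anc_arc_apex[OF u mc g]] by blast
    then show False using own_ends_not_in_other[OF lS lm g] by blast
  qed
  moreover have "prec_depth u ?S l c"
  proof (rule ccontr)
    assume "\<not> prec_depth u ?S l c"
    then have "prec_depth u ?S c l" using prec_depth_total[OF u lS cS lc] by blast
    then have "e \<preceq> w" using lower_ends_up_chain[OF u e(2) wU] w e(1) unfolding prec_depth_def by fastforce
    then have "e \<in> lower_ends l" using lower_ends_interval[OF lkl sl wl e(3)] by blast
    then show False using own_ends_not_in_other[OF lS lc e(1)] by blast
  qed
  ultimately show False using nb lS lm lc by blast
qed

lemma A_u_out_unique:
  assumes "u \<in> U" "(m, c1) \<in> A_u E r u (Fsel u)" "(m, c2) \<in> A_u E r u (Fsel u)"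
  shows "c1 = c2"
  using prec_depth_total[OF assms(1)] assms unfolding A_u_iff[OF assms(1)] by blast

lemma A_u_in_unique:
  assumes "u \<in> U" "(m1, c) \<in> A_u E r u (Fsel u)" "(m2, c) \<in> A_u E r u (Fsel u)"
  shows "m1 = m2"
  using prec_depth_total[OF assms(1)] assms unfolding A_u_iff[OF assms(1)] by blast

abbreviation dep :: "('a set \<times> 'a set) set" where
  "dep \<equiv> dep_arcs E r U Fsel"

lemma dep_iff: "(a, b) \<in> dep \<longleftrightarrow> (\<exists>u\<in>U. (a, b) \<in> A_u E r u (Fsel u))"
  unfolding dep_arcs_def by blast

lemma dep_in_F: "(a, b) \<in> dep \<Longrightarrow> a \<in> F \<and> b \<in> F"
  using dep_iff A_u_in_Fsel Fsel_subset_F by blast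

lemma single_valued_converse_dep: "single_valued (dep\<inverse>)"
proof (rule single_valuedI)
  fix c a b assume "(c, a) \<in> dep\<inverse>" "(c, b) \<in> dep\<inverse>"
  then obtain u u' where u: "u \<in> U" "(a, c) \<in> A_u E r u (Fsel u)"
    and u': "u' \<in> U" "(b, c) \<in> A_u E r u' (Fsel u')"
    using dep_iff by auto
  have "u = u'"
    using up_links_eq_if_common_lower_end[OF u(1) u'(1)] arc_apex_in_lower_ends_up u u' by blast
  then show "a = b" using A_u_in_unique u u' by blast
qed

subsection \<open>The choice of \<open>v\<^sub>u\<close>\<close>

lemma Bset_iff: "l \<in> Bset V E r F v \<longleftrightarrow> l \<in> F \<and> v \<preceq> apex E r l"
proof -
  have "l \<in> F \<Longrightarrow> apex E r l \<in> V" using Vl_subset_V apex_in_Vl vertex_pair_F by blast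
  then show ?thesis unfolding Bset_def desc_def by blast
qed

lemma Bset_subset_L: "Bset V E r F v \<subseteq> L"
  using F_subset_L unfolding Bset_def by blast

lemma Bset_root: "Bset V E r F r = F"
proof
  show "F \<subseteq> Bset V E r F r"
  proof
    fix l assume l: "l \<in> F"
    then have "apex E r l \<in> V" using Vl_subset_V[OF vertex_pair_F] apex_in_Vl[OF vertex_pair_F] by blast
    then show "l \<in> Bset V E r F r" using Bset_iff root_anc l by blast
  qed
qed (unfold Bset_def, blast)

lemma Pl_up_subset_E:
  assumes "u \<in> U"
  shows "Pl E u \<subseteq> E"
proof
  fix e assume "e \<in> Pl E u"
  then obtain w where "w \<in> lower_ends u" "e = parent_edge w"
    using Pl_lower_ends[OF vertex_pair_up[OF assms]] by blast
  then show "e \<in> E" using lower_ends_subset[OF vertex_pair_up[OF assms]] parent_edge_in_E by blast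
qed

lemma v_of_deepest:
  assumes "u \<in> U" "v \<preceq> utop u" "Pl E u \<subseteq> \<Union>(Pl E ` Bset V E r F v)"
  shows "depth E r v \<le> depth E r (v_of V E r F u)"
proof -
  define P where "P v \<longleftrightarrow> v \<preceq> utop u \<and> Pl E u \<subseteq> \<Union>(Pl E ` Bset V E r F v)" for v
  have tV: "utop u \<in> V" using anc_subset_V ubot_in_V[OF assms(1)] utop_anc_ubot[OF assms(1)] by blast
  have "P r" unfolding P_def Bset_root F_covers using root_anc[OF tV] Pl_up_subset_E[OF assms(1)] by blast
  moreover have "\<forall>v. P v \<longrightarrow> depth E r v < Suc (depth E r (utop u))"
    unfolding P_def using depth_anc_le[OF tV] by (simp add: less_Suc_eq_le)
  ultimately obtain v0 where v0: "P v0" "\<forall>v. P v \<longrightarrow> depth E r v \<le> depth E r v0"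
    using ex_has_greatest_nat[of P r "depth E r"] by blast
  have "v_of V E r F u = v0" unfolding v_of_def
  proof (rule the_equality)
    show "v0 \<preceq> utop u \<and> Pl E u \<subseteq> \<Union>(Pl E ` Bset V E r F v0) \<and>
        (\<forall>v\<in>anc E r (utop u). Pl E u \<subseteq> \<Union>(Pl E ` Bset V E r F v) \<longrightarrow> depth E r v \<le> depth E r v0)"
      using v0 unfolding P_def by blast
  next
    fix x assume x: "x \<preceq> utop u \<and> Pl E u \<subseteq> \<Union>(Pl E ` Bset V E r F x) \<and>
        (\<forall>v\<in>anc E r (utop u). Pl E u \<subseteq> \<Union>(Pl E ` Bset V E r F v) \<longrightarrow> depth E r v \<le> depth E r x)"
    then have "depth E r v0 \<le> depth E r x" "depth E r x \<le> depth E r v0"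
      using v0 unfolding P_def by blast+
    then have "depth E r x = depth E r v0" by linarith
    then show "x = v0" using anc_eq_if_same_depth[OF tV, of x v0] x v0(1) unfolding P_def by blast
  qed
  moreover have "P v" unfolding P_def using assms(2,3) ..
  ultimately show ?thesis using v0(2) by simp
qed

lemma not_covered_by_Bset_below_apex:
  assumes u: "u \<in> U" and m: "m \<in> Fsel u" and s: "s \<in> lower_ends m" "s \<preceq> utop u"
  shows "\<not> lower_ends u \<subseteq> \<Union>(lower_ends ` Bset V E r F s)"
proof
  assume "lower_ends u \<subseteq> \<Union>(lower_ends ` Bset V E r F s)"
  then have "Pl E u \<subseteq> \<Union>(Pl E ` Bset V E r F s)"
    using Pl_subset_UN_iff[OF up_link_in_L[OF u] Bset_subset_L] by blast
  then have "depth E r s \<le> depth E r (v_of V E r F u)" using v_of_deepest[OF u s(2)] by blast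
  moreover have "v_of V E r F u \<preceq> apex E r m" using Fsel_subset_B[OF u] m Bset_iff by blast
  moreover have "apex E r m \<preceq> s" "apex E r m \<noteq> s"
    using apex_anc_lower_ends[OF vertex_pair_F] Fsel_subset_F[OF u] m s(1) by blast+
  moreover have "s \<in> V" using lower_ends_subset[OF vertex_pair_F] Fsel_subset_F[OF u] m s(1) by blast
  ultimately show False
    using depth_anc_less depth_anc_le anc_subset_V by (metis leD le_trans subsetD)
qed

subsection \<open>Descendants in the dependency graph\<close>

definition path_covered :: "'a \<Rightarrow> 'a \<Rightarrow> bool" where
  "path_covered s x \<longleftrightarrow> s \<preceq> x \<and>
     (\<forall>w. s \<preceq> w \<longrightarrow> w \<preceq> x \<longrightarrow> w \<noteq> s \<longrightarrow> w \<in> \<Union>(lower_ends ` Bset V E r F s))"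

lemma rtrancl_dep_in_F: "(c, y) \<in> dep\<^sup>* \<Longrightarrow> c \<in> F \<Longrightarrow> y \<in> F"
  by (induction rule: rtrancl_induct) (auto dest: dep_in_F)

lemma path_covered_apex:
  assumes "c \<in> F" "x \<in> Vl E c"
  shows "path_covered (apex E r c) x"
proof -
  have lk: "vertex_pair c" using vertex_pair_F[OF assms(1)] .
  have "apex E r c \<in> V" using Vl_subset_V[OF lk] apex_in_Vl[OF lk] by blast
  then have "c \<in> Bset V E r F (apex E r c)" using Bset_iff assms(1) anc_refl by blast
  moreover have "w \<in> lower_ends c" if "apex E r c \<preceq> w" "w \<preceq> x" "w \<noteq> apex E r c" for w
    using Vl_interval[OF lk assms(2) that(1,2)] that(3) unfolding lower_ends_def by blast
  ultimately show ?thesis unfolding path_covered_def using apex_anc[OF lk assms(2)] by blast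
qed

lemma descendant_path_covered:
  assumes "(c, y) \<in> dep\<^sup>*" "c \<in> F" "x \<in> Vl E y"
  shows "path_covered (apex E r c) x"
  using assms(1,3)
proof (induction arbitrary: x rule: rtrancl_induct)
  case base
  then show ?case using path_covered_apex[OF assms(2)] by blast
next
  case (step y y')
  let ?a = "apex E r y'" and ?s = "apex E r c"
  obtain u where u: "u \<in> U" "(y, y') \<in> A_u E r u (Fsel u)" using step.hyps(2) dep_iff by blast
  have y'F: "y' \<in> F" using dep_in_F step.hyps(2) by blast
  have lk: "vertex_pair y'" using vertex_pair_F[OF y'F] .
  have "?a \<in> Vl E y" using arc_apex_in_lower_ends_tail[OF u] unfolding lower_ends_def by blast
  then have IH: "path_covered ?s ?a" using step.IH by blast
  have xV: "x \<in> V" using Vl_subset_V[OF lk] step.prems by blast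
  have aV: "?a \<in> V" using Vl_subset_V[OF lk] apex_in_Vl[OF lk] by blast
  have ax: "?a \<preceq> x" using apex_anc[OF lk step.prems] .
  have sa: "?s \<preceq> ?a" using IH unfolding path_covered_def by blast
  have y'B: "y' \<in> Bset V E r F ?s" using Bset_iff y'F sa by blast
  have "w \<in> \<Union>(lower_ends ` Bset V E r F ?s)" if w: "?s \<preceq> w" "w \<preceq> x" "w \<noteq> ?s" for w
  proof (cases "w \<preceq> ?a")
    case True
    then show ?thesis using IH w unfolding path_covered_def by blast
  next
    case False
    then have "?a \<preceq> w" "w \<noteq> ?a" using anc_linear[OF xV w(2) ax] anc_refl[OF aV] by blast+
    then have "w \<in> lower_ends y'"
      using Vl_interval[OF lk step.prems _ w(2)] unfolding lower_ends_def by blast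
    then show ?thesis using y'B by blast
  qed
  then show ?case unfolding path_covered_def using anc_trans[OF xV ax sa] by blast
qed

subsection \<open>Two arcs leaving the same link\<close>

lemma lower_end_anc_utop:
  assumes u: "u1 \<in> U" "u2 \<in> U" "u1 \<noteq> u2"
    and s: "s1 \<in> lower_ends u1" "s2 \<in> lower_ends u2" "s1 \<preceq> s2"
  shows "s1 \<preceq> utop u2"
proof -
  have b: "ubot u2 \<in> V" using ubot_in_V[OF u(2)] .
  have tV: "utop u2 \<in> V" using anc_subset_V[OF b] utop_anc_ubot[OF u(2)] by blast
  have s2: "utop u2 \<preceq> s2" "s2 \<preceq> ubot u2" using s(2) unfolding lower_ends_up[OF u(2)] by auto
  have s2V: "s2 \<in> V" using anc_subset_V[OF b] s2(2) by blast
  from anc_linear[OF s2V s2(1) s(3)] show ?thesis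
  proof
    assume ts: "utop u2 \<preceq> s1"
    show ?thesis
    proof (rule ccontr)
      assume "\<not> s1 \<preceq> utop u2"
      then have "s1 \<noteq> utop u2" using anc_refl[OF tV] by blast
      moreover have "s1 \<preceq> ubot u2" using anc_trans[OF b s2(2) s(3)] .
      ultimately have "s1 \<in> lower_ends u2" unfolding lower_ends_up[OF u(2)] using ts by blast
      then show False using up_links_eq_if_common_lower_end[OF u(1,2) s(1)] u(3) by blast
    qed
  qed
qed

lemma arc_sibling_below:
  assumes u: "u \<in> U" and mc: "(m, c) \<in> A_u E r u (Fsel u)" and s: "s \<preceq> utop u"
    and l: "l \<in> Fsel u" "l \<noteq> m" and w: "w \<in> lower_ends l" "w \<in> lower_ends u" "apex E r c \<preceq> w"
  shows "s \<preceq> apex E r l"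
proof (rule ccontr)
  assume ns: "\<not> s \<preceq> apex E r l"
  have mS: "m \<in> Fsel u" using A_u_in_Fsel[OF mc] by blast
  have lk: "vertex_pair l" using vertex_pair_F Fsel_subset_F[OF u] l(1) by blast
  have b: "ubot u \<in> V" using ubot_in_V[OF u] .
  have wV: "w \<in> V" using anc_subset_V[OF b] w(2) unfolding lower_ends_up[OF u] by blast
  have sw: "s \<preceq> w" using anc_trans[OF wV _ s] w(2) unfolding lower_ends_up[OF u] by blast
  have al: "apex E r l \<preceq> w" using apex_anc_lower_ends[OF lk w(1)] by blast
  have als: "apex E r l \<preceq> s" using anc_linear[OF wV al sw] ns by blast
  \<comment> \<open>an own end of \<open>m\<close> lies between \<open>s\<close> and \<open>apex c\<close>, hence on the path of \<open>l\<close>\<close>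
  obtain g where g: "g \<in> own_ends u (Fsel u) m" using own_ends_nonempty[OF u mS] by blast
  have gU: "g \<in> lower_ends u" using own_ends_subset(2)[OF u mS] g by blast
  have gV: "g \<in> V" using lower_ends_up_in_V[OF u gU] .
  have sg: "s \<preceq> g" using anc_trans[OF gV _ s] gU unfolding lower_ends_up[OF u] by blast
  have gw: "g \<preceq> w" using anc_trans[OF wV w(3) own_ends_anc_arc_apex[OF u mc g]] .
  have "g \<in> Vl E l"
    using Vl_interval[OF lk _ anc_trans[OF gV sg als] gw] w(1) unfolding lower_ends_def by blast
  moreover have "g \<noteq> apex E r l" using ns sg by blast
  ultimately have "g \<in> lower_ends l" unfolding lower_ends_def by blast
  then show False using own_ends_not_in_other[OF l g] by blast
qed

lemma lower_ends_covered_by_Bset: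
  assumes u: "u \<in> U" and mc: "(m, c) \<in> A_u E r u (Fsel u)" and s: "s \<preceq> utop u"
    and x: "x \<in> V" "path_covered s x" "apex E r c \<preceq> x"
  shows "lower_ends u \<subseteq> \<Union>(lower_ends ` Bset V E r F s)"
proof
  fix w assume wu: "w \<in> lower_ends u"
  have b: "ubot u \<in> V" using ubot_in_V[OF u] .
  have tV: "utop u \<in> V" using anc_subset_V[OF b] utop_anc_ubot[OF u] by blast
  have w: "utop u \<preceq> w" "w \<preceq> ubot u" "w \<noteq> utop u" using wu unfolding lower_ends_up[OF u] by auto
  have wV: "w \<in> V" using anc_subset_V[OF b] w(2) by blast
  have sw: "s \<preceq> w" using anc_trans[OF wV w(1) s] .
  have cb: "apex E r c \<preceq> ubot u"
    using arc_apex_in_lower_ends_up[OF u mc] unfolding lower_ends_up[OF u] by blast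
  show "w \<in> \<Union>(lower_ends ` Bset V E r F s)"
  proof (cases "w \<preceq> apex E r c")
    case True
    have "w \<noteq> s" using anc_antisym[OF tV s] w(1,3) by blast
    then show ?thesis using x(2) sw anc_trans[OF x(1) x(3) True] unfolding path_covered_def by blast
  next
    case False
    then have cw: "apex E r c \<preceq> w" using anc_linear[OF b w(2) cb] by blast
    show ?thesis
    proof (cases "\<exists>l\<in>Fsel u - {m}. w \<in> lower_ends l")
      case True
      then obtain l where l: "l \<in> Fsel u" "l \<noteq> m" "w \<in> lower_ends l" by blast
      then have "l \<in> Bset V E r F s"
        using arc_sibling_below[OF u mc s l(1,2) l(3) wu cw] Bset_iff Fsel_subset_F[OF u] by blast
      then show ?thesis using l(3) by blast
    next
      case False
      then have "w \<in> own_ends u (Fsel u) m" using wu unfolding own_ends_def by blast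
      then show ?thesis using own_ends_anc_arc_apex[OF u mc] \<open>\<not> w \<preceq> apex E r c\<close> by blast
    qed
  qed
qed

lemma arcs_from_same_tail_absurd:
  assumes u: "u1 \<in> U" "u2 \<in> U" "u1 \<noteq> u2"
    and a: "(m, c1) \<in> A_u E r u1 (Fsel u1)" "(m, c2) \<in> A_u E r u2 (Fsel u2)"
    and x: "x \<in> V" "path_covered (apex E r c1) x" "apex E r c2 \<preceq> x"
    and le: "apex E r c1 \<preceq> apex E r c2"
  shows False
proof -
  have s: "apex E r c1 \<preceq> utop u2"
    using lower_end_anc_utop[OF u arc_apex_in_lower_ends_up[OF u(1) a(1)]
        arc_apex_in_lower_ends_up[OF u(2) a(2)] le] .
  have "m \<in> Fsel u2" using A_u_in_Fsel[OF a(2)] by blast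
  from not_covered_by_Bset_below_apex[OF u(2) this arc_apex_in_lower_ends_tail[OF u(1) a(1)] s]
  show False using lower_ends_covered_by_Bset[OF u(2) a(2) s x] by blast
qed

lemma dep_no_split:
  assumes "(m, c1) \<in> dep" "(m, c2) \<in> dep" "c1 \<noteq> c2"
    and "(c1, y) \<in> dep\<^sup>*" "(c2, z) \<in> dep\<^sup>*" "x \<in> Vl E y" "x \<in> Vl E z"
  shows False
proof -
  obtain u1 u2 where u: "u1 \<in> U" "u2 \<in> U"
    and a: "(m, c1) \<in> A_u E r u1 (Fsel u1)" "(m, c2) \<in> A_u E r u2 (Fsel u2)"
    using assms(1,2) dep_iff by blast
  have "u1 \<noteq> u2" using A_u_out_unique[OF u(1) a(1)] a(2) assms(3) by blast
  have F: "c1 \<in> F" "c2 \<in> F" using dep_in_F assms(1,2) by blast+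
  have cov: "path_covered (apex E r c1) x" "path_covered (apex E r c2) x"
    using descendant_path_covered[OF assms(4) F(1) assms(6)]
      descendant_path_covered[OF assms(5) F(2) assms(7)] .
  have xV: "x \<in> V"
    using Vl_subset_V[OF vertex_pair_F[OF rtrancl_dep_in_F[OF assms(5) F(2)]]] assms(7) by blast
  have s: "apex E r c1 \<preceq> x" "apex E r c2 \<preceq> x" using cov unfolding path_covered_def by blast+
  from anc_linear[OF xV s] show False
  proof
    assume "apex E r c1 \<preceq> apex E r c2"
    then show False by (rule arcs_from_same_tail_absurd[OF u \<open>u1 \<noteq> u2\<close> a xV cov(1) s(2)])
  next
    assume "apex E r c2 \<preceq> apex E r c1"
    then show False
      by (rule arcs_from_same_tail_absurd[OF u(2,1) \<open>u1 \<noteq> u2\<close>[symmetric] a(2,1) xV cov(2) s(1)])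
  qed
qed

end

theorem lemma12:
  fixes V :: "'a set" and E :: "'a set set" and L :: "'a set set"
    and w :: "'a set \<Rightarrow> real" and r :: 'a and F :: "'a set set"
    and U :: "'a set set" and Fsel :: "'a set \<Rightarrow> 'a set set"
    and C :: "'a set set" and A :: "('a set \<times> 'a set) set"
    and l0 l1 l2 :: "'a set"
  assumes tree: "is_spanning_tree V E"
    and links: "L \<subseteq> {{x, y} | x y. x \<in> V \<and> y \<in> V \<and> x \<noteq> y}"
    and weights: "\<forall>l\<in>L. w l > 0"
    and root: "r \<in> V"
    and sol: "F \<subseteq> L" "\<Union>(Pl E ` F) = E"
    and Uup: "U \<subseteq> L_up E r L"
    and Udisj: "\<forall>u\<in>U. \<forall>u'\<in>U. u \<noteq> u' \<longrightarrow> Pl E u \<inter> Pl E u' = {}"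
    and Fsel: "\<forall>u\<in>U. valid_Fu V E r F u (Fsel u)"
    and comp: "l0 \<in> F" "C = {x. (l0, x) \<in> (dep_arcs E r U Fsel \<union> (dep_arcs E r U Fsel)\<inverse>)\<^sup>*}"
    and arcs: "A = dep_arcs E r U Fsel \<inter> (C \<times> C)"
    and l12: "l1 \<in> C" "l2 \<in> C" "Vl E l1 \<inter> Vl E l2 \<noteq> {}"
  shows "(l1, l2) \<in> A\<^sup>* \<or> (l2, l1) \<in> A\<^sup>*"
proof -
  interpret wtap_dependency V E r L F U Fsel
    using tree root links sol Uup Udisj Fsel by unfold_locales auto
  let ?R = "dep_arcs E r U Fsel"
  obtain x where x: "x \<in> Vl E l1" "x \<in> Vl E l2" using l12(3) by blast
  have l01: "(l0, l1) \<in> (?R \<union> ?R\<inverse>)\<^sup>*" and l02: "(l0, l2) \<in> (?R \<union> ?R\<inverse>)\<^sup>*"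
    using comp(2) l12(1,2) by blast+
  have "(l1, l0) \<in> (?R \<union> ?R\<inverse>)\<^sup>*" using l01 by (rule symD[OF sym_rtrancl[OF sym_Un_converse]])
  then have "(l1, l2) \<in> (?R \<union> ?R\<inverse>)\<^sup>*" using l02 by (rule rtrancl_trans)
  then obtain \<rho> where "(\<rho>, l1) \<in> ?R\<^sup>*" "(\<rho>, l2) \<in> ?R\<^sup>*"
    using rtrancl_Un_converse_common_source[OF single_valued_converse_dep] by blast
  then have "(l1, l2) \<in> ?R\<^sup>* \<or> (l2, l1) \<in> ?R\<^sup>*"
    using x by (rule rtrancl_comparable_if_no_split[where P = "\<lambda>y. x \<in> Vl E y"]) (rule dep_no_split)
  moreover have "?R `` C \<subseteq> C" using comp(2) by (blast intro: rtrancl_into_rtrancl)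
  then have "(a, b) \<in> A\<^sup>*" if "(a, b) \<in> ?R\<^sup>*" "a \<in> C" for a b
    unfolding arcs using rtrancl_restrict_closed[OF that] by blast
  ultimately show ?thesis using l12(1,2) by blast
qed

end
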